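(* For $s>0$, define $\boldsymbol \mu(s)$ as the unique minimizer of the regularized and constrained minimization problem \[ \min_{\boldsymbol \theta \in \mathbb{R}^d,\ \boldsymbol \theta \geq \mathbf{0}} \left\{ f(\boldsymbol \theta) + \frac{1}{s} \langle \boldsymbol k, \boldsymbol \theta \rangle \right\} \] and let $I(s) = \{ i \in \{1, \dots, d\} \mid \mu_i(s) > 0 \}$. Then: (1) The minimizer $\boldsymbol \mu(s)$ is nondecreasing in $s$, i.e., for all $i \in \{1,\dots,d\}$, $\mu_i(s)$ is nondecreasing in $s$. Consequently, $I(s)$ is nondecreasing in $s$ for the inclusion. (2) Denote $s_1, \dots, s_q$ the points of discontinuity of the function $s \mapsto I(s)$. For all $s > 0$, $s \neq s_1, \dots, s_q$, \[ \boldsymbol \theta^{(\varepsilon)}\left(s \log \tfrac{1}{\varepsilon}\right) \xrightarrow[\varepsilon \to 0]{} \boldsymbol \theta_*^{(I(s))} . \] Moreover, the convergence is uniform for $s$ in compact subsets of $\mathbb{R}_{>0} \setminus \{s_1, \dots, s_q\}$. (3) For all $s>0$, \[ \frac{1}{s \log \frac{1}{\varepsilon}} \int_{0}^{s \log \frac{1}{\varepsilon}} \boldsymbol \theta^{(\varepsilon)}(t)\, \mathrm{d} t \xrightarrow[\varepsilon \to 0]{} \boldsymbol \mu(s) . \] Moreover, the convergence is uniform for $s$ in compact subsets of $\mathbb{R}_{>0}$.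
   Context: Let $\boldsymbol X \in \mathbb{R}^{n\times d}$ (rows $\boldsymbol x_1,\dots,\boldsymbol x_n$, columns/features $\boldsymbol X_1,\dots,\boldsymbol X_d$), $\boldsymbol y \in \mathbb{R}^n$, $\boldsymbol M = \boldsymbol X^\top \boldsymbol X$, $\boldsymbol r = \boldsymbol X^\top \boldsymbol y$, and $f(\boldsymbol \theta) = \frac{1}{2}\Vert \boldsymbol y\Vert^2 - \langle \boldsymbol r, \boldsymbol \theta\rangle + \frac12 \langle \boldsymbol \theta, \boldsymbol M \boldsymbol \theta\rangle$. Assume (A1) $\boldsymbol r > \mathbf{0}$ (all coordinates positive) and (A2) $M_{ij} = \langle \boldsymbol X_i, \boldsymbol X_j\rangle \leq 0$ for all $i \neq j$. The diagonal linear network dynamics (gradient flow in $u_i$ with $\theta_i = u_i^2/4$) is \[ \frac{\mathrm{d} \theta_i}{\mathrm{d} t} = \theta_i \Big( r_i - \sum_{j=1}^{d} M_{ij} \theta_j \Big), \quad i=1,\dots,d. \] For $\varepsilon>0$, $\boldsymbol \theta^{(\varepsilon)}(t)$ denotes the solution of this ODE started from $\boldsymbol \theta^{(\varepsilon)}(0) = (C_1 \varepsilon^{k_1}, \dots, C_d \varepsilon^{k_d})$ with constants $\boldsymbol C = (C_1,\dots,C_d) > \mathbf{0}$ and $\boldsymbol k = (k_1,\dots,k_d) > \mathbf{0}$. For $I \subset \{1,\dots,d\}$, $\boldsymbol \theta_*^{(I)}$ denotes the unique fixed point $\boldsymbol \theta \geq \mathbf{0}$ of this ODE with support $\{i : \theta_i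 > 0\}$ equal to $I$; explicitly $(\boldsymbol \theta_*^{(I)})_I = (\boldsymbol M_{II})^{-1}\boldsymbol r_I$ and $(\boldsymbol \theta_*^{(I)})_{I^c} = \mathbf{0}$, where $\boldsymbol M_{II}$ is the principal submatrix of $\boldsymbol M$ indexed by $I$ and $\boldsymbol r_I$ the subvector of $\boldsymbol r$ indexed by $I$. Vector inequalities are coordinatewise. *)

theory Defs
  imports "HOL-Analysis.Analysis"
begin

text \<open>Design matrix X with n rows (samples) and d columns (features); the feature
  dimension d and sample size n are the finite index types 'd and 'n.\<close>

definition gram :: "real^'d^'n \<Rightarrow> real^'d^'d" where
  "gram X = transpose X ** X"

definition corr :: "real^'d^'n \<Rightarrow> real^'n \<Rightarrow> real^'d" where
  "corr X y = transpose X *v y"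

definition fobj :: "real^'d^'n \<Rightarrow> real^'n \<Rightarrow> real^'d \<Rightarrow> real" where
  "fobj X y \<theta> = 1/2 * (norm y)^2 - inner (corr X y) \<theta> + 1/2 * inner \<theta> (gram X *v \<theta>)"

definition reg_obj :: "real^'d^'n \<Rightarrow> real^'n \<Rightarrow> real^'d \<Rightarrow> real \<Rightarrow> real^'d \<Rightarrow> real" where
  "reg_obj X y k s \<theta> = fobj X y \<theta> + (1/s) * inner k \<theta>"

definition nonneg_vec :: "real^'d \<Rightarrow> bool" where
  "nonneg_vec \<theta> \<longleftrightarrow> (\<forall>i. 0 \<le> \<theta> $ i)"

definition mu :: "real^'d^'n \<Rightarrow> real^'n \<Rightarrow> real^'d \<Rightarrow> real \<Rightarrow> real^'d" where
  "mu X y k s = (THE \<theta>. nonneg_vec \<theta> \<and>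
      (\<forall>\<theta>'. nonneg_vec \<theta>' \<longrightarrow> reg_obj X y k s \<theta> \<le> reg_obj X y k s \<theta>'))"

definition supp_mu :: "real^'d^'n \<Rightarrow> real^'n \<Rightarrow> real^'d \<Rightarrow> real \<Rightarrow> 'd set" where
  "supp_mu X y k s = {i. mu X y k s $ i > 0}"

text \<open>theta_*^(I): theta_I = (M_II)^{-1} r_I, theta_{I^c} = 0, written as the
  solution of the linear system M_II theta_I = r_I with theta vanishing off I.\<close>
definition theta_star :: "real^'d^'n \<Rightarrow> real^'n \<Rightarrow> 'd set \<Rightarrow> real^'d" where
  "theta_star X y I = (THE \<theta>. (\<forall>i. i \<notin> I \<longrightarrow> \<theta> $ i = 0) \<and>
      (\<forall>i\<in>I. (gram X *v \<theta>) $ i = corr X y $ i))"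

definition dln_field :: "real^'d^'n \<Rightarrow> real^'n \<Rightarrow> real^'d \<Rightarrow> real^'d" where
  "dln_field X y \<theta> = (\<chi> i. \<theta> $ i * (corr X y $ i - (gram X *v \<theta>) $ i))"

definition jump_points :: "real^'d^'n \<Rightarrow> real^'n \<Rightarrow> real^'d \<Rightarrow> real set" where
  "jump_points X y k = {s. 0 < s \<and> \<not> (\<exists>\<delta>>0. \<forall>s'. 0 < s' \<and> \<bar>s' - s\<bar> < \<delta> \<longrightarrow>
       supp_mu X y k s' = supp_mu X y k s)}"

end

(*
  The minimiser mu(s) is characterised by its KKT conditions. Under (A1) and (A2) the Gram matrix M
  is a positive definite Z-matrix, so the comparison principle for M-matrices makes mu(s)
  nondecreasing in s; hence the support I(s) only jumps at finitely many points.

  Along the flow, theta_i(t) = theta_i(0) exp (r_i t - (M int_0^t theta)_i) with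
  theta_i(0) = C_i eps^k_i. With L = ln (1/eps), the rescaled integral R(s) = (1/L) int_0^(sL) theta
  thus satisfies theta_i(s L) = C_i exp (L w_i(s)) with w(s) = s r - k - M R(s), and since theta stays
  bounded, R(s) satisfies the KKT conditions of the regularized problem up to errors that vanish as
  eps -> 0. A stability estimate for these conditions gives R(s) -> s mu(s) uniformly, which is (3).

  Near a point s where I = A is locally constant, w stays uniformly negative off A, so those
  coordinates are exponentially small. The Lyapunov function sum_i theta_i - theta*_i ln theta_i, with
  theta* = theta_*^(A), then forces the trajectory to visit any neighbourhood of theta* during
  [(s - delta) L, s L], and the decrease of f keeps it close up to time s L, which is (2).
*)
theory Submission
  imports Defs
begin

section \<open>Z-matrices\<close>

definition Z_matrix :: "real^'d^'d \<Rightarrow> bool" where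
  "Z_matrix A \<longleftrightarrow> (\<forall>i j. i \<noteq> j \<longrightarrow> A $ i $ j \<le> 0)"

definition positive_definite :: "real^'d^'d \<Rightarrow> bool" where
  "positive_definite A \<longleftrightarrow> (\<forall>v. v \<noteq> 0 \<longrightarrow> 0 < inner v (A *v v))"

lemma inner_matrix_vector_mult_sum:
  "inner u (A *v v) = (\<Sum>i\<in>UNIV. \<Sum>j\<in>UNIV. u $ i * A $ i $ j * v $ j)"
  by (simp add: inner_vec_def matrix_vector_mult_def sum_distrib_left mult.assoc)

lemma Z_matrix_quadratic_abs_le:
  assumes "Z_matrix A"
  shows "inner (\<chi> i. \<bar>v $ i\<bar>) (A *v (\<chi> i. \<bar>v $ i\<bar>)) \<le> inner v (A *v v)"
  unfolding inner_matrix_vector_mult_sum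
proof (intro sum_mono)
  fix i j
  show "(\<chi> i. \<bar>v $ i\<bar>) $ i * A $ i $ j * (\<chi> i. \<bar>v $ i\<bar>) $ j \<le> v $ i * A $ i $ j * v $ j"
  proof (cases "i = j")
    case False
    then have "A $ i $ j * (\<bar>v $ i\<bar> * \<bar>v $ j\<bar>) \<le> A $ i $ j * (v $ i * v $ j)"
      using assms by (intro mult_left_mono_neg) (auto simp: Z_matrix_def abs_mult[symmetric])
    then show ?thesis by (simp add: mult_ac)
  qed (simp add: abs_mult_self_eq mult_ac)
qed

lemma Z_matrix_mult_nonneg_le_diag:
  assumes "Z_matrix A" "nonneg_vec x"
  shows "(A *v x) $ j \<le> A $ j $ j * x $ j"
proof -
  have "(A *v x) $ j = (\<Sum>l\<in>UNIV. A $ j $ l * x $ l)"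
    by (simp add: matrix_vector_mult_def)
  also have "\<dots> \<le> (\<Sum>l\<in>UNIV. if l = j then A $ j $ j * x $ j else 0)"
    using assms by (intro sum_mono) (auto intro: mult_nonpos_nonneg simp: Z_matrix_def nonneg_vec_def)
  finally show ?thesis by simp
qed

lemma Z_matrix_comparison:
  assumes "Z_matrix A" "positive_definite A"
    and cmp: "\<And>i. b $ i < a $ i \<Longrightarrow> (A *v a) $ i \<le> (A *v b) $ i"
  shows "a $ i \<le> b $ i"
proof -
  define d where "d = (\<chi> i. max (a $ i - b $ i) 0)"
  have "d $ i * (A *v d) $ i \<le> 0" for i
  proof (cases "b $ i < a $ i")
    case True
    have "(A *v d) $ i \<le> (\<Sum>j\<in>UNIV. A $ i $ j * (a $ j - b $ j))"
      unfolding matrix_vector_mult_def vec_lambda_beta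
    proof (intro sum_mono)
      fix j
      show "A $ i $ j * d $ j \<le> A $ i $ j * (a $ j - b $ j)"
        using assms(1) True
        by (cases "j = i") (auto simp: Z_matrix_def d_def intro: mult_left_mono_neg)
    qed
    also have "\<dots> = (A *v a) $ i - (A *v b) $ i"
      by (simp add: matrix_vector_mult_def right_diff_distrib sum_subtractf)
    finally show ?thesis
      using cmp[OF True] by (intro mult_nonneg_nonpos) (auto simp: d_def)
  qed (simp add: d_def)
  then have "inner d (A *v d) \<le> 0"
    unfolding inner_vec_def by (simp add: sum_nonpos)
  then have "d = 0"
    using assms(2) unfolding positive_definite_def by (meson not_le)
  then show ?thesis
    by (metis d_def max.cobounded1 vec_lambda_beta zero_index diff_le_0_iff_le)
qed

lemma positive_definite_diag_pos:
  assumes "positive_definite A"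
  shows "0 < A $ i $ i"
proof -
  have "0 < inner (axis i 1) (A *v axis i (1::real))"
    using assms unfolding positive_definite_def by (metis axis_nth zero_index zero_neq_one)
  moreover have "(A *v axis i 1) $ i = A $ i $ i"
    by (metis cart_eq_inner_axis matrix_vector_mul_component)
  ultimately show ?thesis
    by (simp add: inner_axis')
qed

lemma positive_definite_coercive:
  fixes A :: "real^'d^'d"
  assumes "positive_definite A"
  shows "\<exists>c>0. \<forall>v. c * (norm v)^2 \<le> inner v (A *v v)"
proof -
  obtain i :: 'd where True by simp
  have ne: "sphere (0::real^'d) 1 \<noteq> {}"
    using norm_axis_1[of i] by (metis mem_sphere_0 empty_iff)
  have "continuous_on (sphere 0 1) (\<lambda>v::real^'d. inner v (A *v v))"
    by (intro continuous_intros linear_continuous_on matrix_vector_mul_bounded_linear)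
  then obtain v0 where v0: "v0 \<in> sphere 0 1" "\<And>v. v \<in> sphere 0 1 \<Longrightarrow> inner v0 (A *v v0) \<le> inner v (A *v v)"
    using continuous_attains_inf[OF compact_sphere ne] by blast
  have pos: "0 < inner v0 (A *v v0)"
    using assms v0(1) unfolding positive_definite_def by (metis mem_sphere_0 norm_zero zero_neq_one)
  have "inner v0 (A *v v0) * (norm v)^2 \<le> inner v (A *v v)" for v
  proof (cases "v = 0")
    case False
    define u where "u = (1 / norm v) *\<^sub>R v"
    have "inner v0 (A *v v0) \<le> inner u (A *v u)"
      using False by (intro v0(2)) (simp add: u_def)
    moreover have "inner v (A *v v) = (norm v)^2 * inner u (A *v u)"
      using False by (simp add: u_def matrix_vector_mult_scaleR power2_eq_square)
    ultimately show ?thesis by (simp add: mult.commute mult_right_mono)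
  qed simp
  then show ?thesis using pos by blast
qed

lemma inner_gram: "inner v (gram X *v v) = (norm (X *v v))^2"
proof -
  have "inner v (gram X *v v) = inner v (transpose X *v (X *v v))"
    by (simp add: gram_def matrix_vector_mul_assoc)
  also have "\<dots> = inner (X *v v) (X *v v)"
    by (simp only: dot_lmul_matrix[symmetric] vector_transpose_matrix)
  finally show ?thesis by (simp add: power2_norm_eq_inner)
qed

lemma inner_corr: "inner (corr X y) v = inner y (X *v v)"
  by (metis corr_def dot_lmul_matrix transpose_transpose vector_transpose_matrix)

lemma gram_transpose: "transpose (gram X) = gram X"
  by (simp add: gram_def matrix_transpose_mul)

lemma inner_gram_commute: "inner u (gram X *v v) = inner v (gram X *v u)"
proof -
  have "inner u (gram X *v v) = inner (u v* transpose (gram X)) v"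
    by (simp add: dot_lmul_matrix gram_transpose)
  then show ?thesis by (simp add: vector_transpose_matrix inner_commute)
qed

lemma gram_positive_definite:
  fixes X :: "real^'d^'n" and y :: "real^'n"
  assumes corr_pos: "\<And>i. 0 < corr X y $ i" and "Z_matrix (gram X)"
  shows "positive_definite (gram X)"
  unfolding positive_definite_def
proof (intro allI impI)
  fix v :: "real^'d" assume "v \<noteq> 0"
  then obtain i where "v $ i \<noteq> 0" by (metis vec_eq_iff zero_index)
  define u where "u = (\<chi> i. \<bar>v $ i\<bar>)"
  have "0 < inner (corr X y) u"
    unfolding inner_vec_def using corr_pos \<open>v $ i \<noteq> 0\<close>
    by (intro sum_pos2[of _ i]) (auto simp: u_def less_imp_le)
  then have "X *v u \<noteq> 0" by (auto simp: inner_corr)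
  then have "0 < inner u (gram X *v u)" by (simp add: inner_gram)
  also have "\<dots> \<le> inner v (gram X *v v)"
    unfolding u_def by (rule Z_matrix_quadratic_abs_le) fact
  finally show "0 < inner v (gram X *v v)" .
qed

lemma quadratic_nonneg_on_ray_kkt:
  fixes g m c :: real
  assumes "0 < m" "0 \<le> c" and nonneg: "\<And>t. - c \<le> t \<Longrightarrow> 0 \<le> t * g + t^2 * m / 2"
  shows "0 \<le> g" and "0 < c \<Longrightarrow> g = 0"
proof -
  show g: "0 \<le> g"
  proof (rule ccontr)
    assume "\<not> 0 \<le> g"
    then have "- g / m * g + (- g / m)^2 * m / 2 < 0"
      using assms(1) by (simp add: power2_eq_square field_simps zero_less_mult_iff)
    moreover have "0 \<le> - g / m"
      using \<open>\<not> 0 \<le> g\<close> assms(1) by (simp add: divide_nonpos_pos)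
    then have "- c \<le> - g / m"
      using assms(2) by linarith
    ultimately show False using nonneg by fastforce
  qed
  assume "0 < c"
  show "g = 0"
  proof (rule ccontr)
    assume "g \<noteq> 0"
    define t where "t = - min c (g / m)"
    have "0 < g / m" using g \<open>g \<noteq> 0\<close> assms(1) by simp
    then have "t < 0" using \<open>0 < c\<close> by (simp add: t_def)
    have "min c (g / m) * m \<le> g / m * m"
      using assms(1) by (intro mult_right_mono) auto
    then have "- g \<le> t * m" using assms(1) by (simp add: t_def)
    note t = \<open>t < 0\<close> this
    have "t * g + t^2 * m / 2 = t * (g + t * m / 2)"
      by (simp add: power2_eq_square algebra_simps)
    also have "\<dots> < 0"
      using t g \<open>g \<noteq> 0\<close> by (intro mult_neg_pos) auto
    finally show False using nonneg[of t] by (simp add: t_def)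
  qed
qed

lemma quadratic_le_imp_le:
  fixes c a b n :: real
  assumes "0 < c" "0 \<le> a" "0 \<le> b" and le: "c * n^2 \<le> a * n + b"
  shows "n \<le> (a + b) / c + 1"
proof (rule ccontr)
  assume "\<not> ?thesis"
  then have n: "a + b + c < c * n"
    using assms(1) by (simp add: field_simps)
  then have "c * 1 < c * n" using assms(2,3) by linarith
  then have "1 \<le> n" using assms(1) by simp
  then have "b \<le> b * n" "0 \<le> c * n"
    using assms(1,3) by (auto simp: mult_le_cancel_left1)
  then have "a * n + b \<le> n * (a + b + c)"
    by (simp add: algebra_simps)
  also have "\<dots> < n * (c * n)" using n \<open>1 \<le> n\<close> by simp
  finally show False using le by (simp add: power2_eq_square mult_ac)
qed

lemma divide_add_one_mult_le:
  fixes a x :: real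
  assumes "0 \<le> a" "0 \<le> x"
  shows "x / (a + 1) * a \<le> x"
  using assms by (simp add: field_simps)

lemma DERIV_le_imp_diff_le:
  fixes f :: "real \<Rightarrow> real"
  assumes "a \<le> b" "continuous_on {a..b} f"
    and "\<And>x. a < x \<Longrightarrow> x < b \<Longrightarrow> (f has_real_derivative f' x) (at x)"
    and "\<And>x. a < x \<Longrightarrow> x < b \<Longrightarrow> f' x \<le> m"
  shows "f b - f a \<le> m * (b - a)"
proof (cases "a = b")
  case False
  then obtain l z where z: "a < z" "z < b" "DERIV f z :> l" "f b - f a = (b - a) * l"
    using MVT[of a b f] assms(1-3) real_differentiable_def by (meson order_le_less)
  then have "l \<le> m" using DERIV_unique[OF z(3) assms(3)[OF z(1,2)]] assms(4)[OF z(1,2)] by simp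
  then show ?thesis using z(4) assms(1) by (simp add: mult.commute mult_right_mono)
qed simp

lemma DERIV_ge_imp_diff_ge:
  fixes f :: "real \<Rightarrow> real"
  assumes "a \<le> b" "continuous_on {a..b} f"
    and "\<And>x. a < x \<Longrightarrow> x < b \<Longrightarrow> (f has_real_derivative f' x) (at x)"
    and "\<And>x. a < x \<Longrightarrow> x < b \<Longrightarrow> m \<le> f' x"
  shows "m * (b - a) \<le> f b - f a"
proof -
  have "(\<lambda>x. - f x) b - (\<lambda>x. - f x) a \<le> - m * (b - a)"
  proof (rule DERIV_le_imp_diff_le[OF assms(1)])
    show "continuous_on {a..b} (\<lambda>x. - f x)" using assms(2) by (rule continuous_on_minus)
    show "((\<lambda>x. - f x) has_real_derivative - f' x) (at x)" if "a < x" "x < b" for x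
      using assms(3)[OF that] by (rule DERIV_minus)
    show "- f' x \<le> - m" if "a < x" "x < b" for x
      using assms(4)[OF that] by simp
  qed
  then show ?thesis by simp
qed

text \<open>A jump of a monotone set-valued map is an endpoint of one of its finitely many level sets.\<close>
lemma finite_jumps_of_mono_sets:
  fixes I :: "real \<Rightarrow> 'a::finite set"
  assumes mono: "\<And>s s'. 0 < s \<Longrightarrow> s \<le> s' \<Longrightarrow> I s \<subseteq> I s'"
  shows "finite {s. 0 < s \<and> \<not> (\<exists>\<delta>>0. \<forall>s'. 0 < s' \<and> \<bar>s' - s\<bar> < \<delta> \<longrightarrow> I s' = I s)}"
    (is "finite ?J")
proof -
  define S where "S A = {s. 0 < s \<and> I s = A}" for A
  have "s0 \<in> {Inf (S (I s0)), Sup (S (I s0))}" if J: "s0 \<in> ?J" for s0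
  proof -
    have inS: "s0 \<in> S (I s0)" using J by (simp add: S_def)
    have "\<not> ((\<exists>a\<in>S (I s0). a < s0) \<and> (\<exists>b\<in>S (I s0). s0 < b))"
    proof
      assume "(\<exists>a\<in>S (I s0). a < s0) \<and> (\<exists>b\<in>S (I s0). s0 < b)"
      then obtain a b where ab: "0 < a" "a < s0" "I a = I s0" "s0 < b" "I b = I s0"
        by (auto simp: S_def)
      have "I s' = I s0" if "0 < s'" "\<bar>s' - s0\<bar> < min (s0 - a) (b - s0)" for s'
      proof -
        have "a \<le> s'" "s' \<le> b" using that by auto
        then show ?thesis using mono[of a s'] mono[of s' b] ab by auto
      qed
      moreover have "0 < min (s0 - a) (b - s0)" using ab by simp
      ultimately have "\<exists>\<delta>>0. \<forall>s'. 0 < s' \<and> \<bar>s' - s0\<bar> < \<delta> \<longrightarrow> I s' = I s0"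
        by blast
      then show False using J by blast
    qed
    then consider "\<forall>a\<in>S (I s0). s0 \<le> a" | "\<forall>b\<in>S (I s0). b \<le> s0"
      by (meson not_le)
    then show ?thesis
    proof cases
      case 1
      have "Inf (S (I s0)) = s0" using 1 by (intro cInf_eq_minimum inS) blast
      then show ?thesis by simp
    next
      case 2
      have "Sup (S (I s0)) = s0" using 2 by (intro cSup_eq_maximum inS) blast
      then show ?thesis by simp
    qed
  qed
  then have "?J \<subseteq> (\<Union>A. {Inf (S A), Sup (S A)})" by blast
  moreover have "finite (\<Union>A. {Inf (S A), Sup (S A)})" by simp
  ultimately show ?thesis by (rule finite_subset)
qed

lemma eventually_at_right_0_lt_1: "eventually (\<lambda>x::real. 0 < x \<and> x < 1) (at_right 0)"
  unfolding eventually_at_right_field by (auto intro!: exI[of _ 1])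

lemma filterlim_ln_inverse_at_right_0: "filterlim (\<lambda>x::real. ln (1 / x)) at_top (at_right 0)"
  using filterlim_compose[OF ln_at_top filterlim_inverse_at_top_right] by (simp add: inverse_eq_divide)

lemma tendsto_inverse_ln_inverse_at_right_0: "((\<lambda>x::real. 1 / ln (1 / x)) \<longlongrightarrow> 0) (at_right 0)"
  by (rule tendsto_divide_0[OF tendsto_const filterlim_at_top_imp_at_infinity[OF filterlim_ln_inverse_at_right_0]])

lemma tendsto_exp_ln_inverse_at_right_0:
  assumes "0 < c"
  shows "((\<lambda>x::real. exp (- (ln (1 / x) * c))) \<longlongrightarrow> 0) (at_right 0)"
proof -
  have "((\<lambda>x::real. x powr c) \<longlongrightarrow> 0) (at_right 0)"
    by (rule tendsto_zero_powrI[OF _ tendsto_const])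
      (use assms eventually_at_right_0_lt_1 in \<open>auto intro: tendsto_ident_at eventually_mono\<close>)
  moreover have "eventually (\<lambda>x::real. x powr c = exp (- (ln (1 / x) * c))) (at_right 0)"
    using eventually_at_right_0_lt_1 by eventually_elim (simp add: powr_def ln_div mult.commute)
  ultimately show ?thesis using tendsto_cong by fastforce
qed

section \<open>The regularized problem\<close>

locale least_squares =
  fixes X :: "real^'d^'n" and y :: "real^'n"
begin

abbreviation "M \<equiv> gram X"
abbreviation "r \<equiv> corr X y"

end

locale dln_problem = least_squares X y
  for X :: "real^'d^'n" and y :: "real^'n" +
  fixes k :: "real^'d"
  assumes corr_pos: "\<And>i. 0 < r $ i"
    and gram_Z_matrix: "Z_matrix M"
    and k_pos: "\<And>i. 0 < k $ i"
begin

lemma gram_pos_def: "positive_definite M"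
  using gram_positive_definite[OF corr_pos gram_Z_matrix] .

definition coercivity :: real where
  "coercivity = (SOME c. 0 < c \<and> (\<forall>v. c * (norm v)^2 \<le> inner v (M *v v)))"

lemma coercivity_pos: "0 < coercivity"
  and coercivity_le: "coercivity * (norm v)^2 \<le> inner v (M *v v)"
  using someI_ex[OF positive_definite_coercive[OF gram_pos_def]] unfolding coercivity_def by auto

definition gram_norm :: real where
  "gram_norm = onorm ((*v) M)"

lemma gram_norm_nonneg: "0 \<le> gram_norm"
  unfolding gram_norm_def by (rule onorm_pos_le[OF matrix_vector_mul_bounded_linear])

lemma norm_gram_mult_le: "norm (M *v v) \<le> gram_norm * norm v"
  unfolding gram_norm_def by (rule onorm[OF matrix_vector_mul_bounded_linear])

lemma abs_gram_mult_component_le: "\<bar>(M *v v) $ i\<bar> \<le> gram_norm * norm v"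
  using component_le_norm_cart[of "M *v v" i] norm_gram_mult_le[of v] by simp

lemma inner_gram_le: "inner v (M *v v) \<le> gram_norm * (norm v)^2"
proof -
  have "inner v (M *v v) \<le> norm v * norm (M *v v)" by (rule norm_cauchy_schwarz)
  also have "\<dots> \<le> norm v * (gram_norm * norm v)" by (intro mult_left_mono norm_gram_mult_le) simp
  finally show ?thesis by (simp add: power2_eq_square mult_ac)
qed

definition reg_grad :: "real \<Rightarrow> real^'d \<Rightarrow> real^'d" where
  "reg_grad s \<theta> = M *v \<theta> - r + (1/s) *\<^sub>R k"

definition kkt :: "real \<Rightarrow> real^'d \<Rightarrow> bool" where
  "kkt s \<theta> \<longleftrightarrow> nonneg_vec \<theta> \<and> nonneg_vec (reg_grad s \<theta>) \<and> (\<forall>i. 0 < \<theta> $ i \<longrightarrow> reg_grad s \<theta> $ i = 0)"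

lemma reg_obj_diff:
  "reg_obj X y k s b - reg_obj X y k s a
     = inner (b - a) (reg_grad s a) + 1/2 * inner (b - a) (M *v (b - a))"
  using inner_gram_commute[of a X b]
  by (simp add: reg_obj_def fobj_def reg_grad_def inner_diff_left inner_diff_right inner_add_right
      matrix_vector_mult_diff_distrib inner_commute[of _ r] inner_commute[of _ k] algebra_simps)

lemma kkt_complementarity: "kkt s a \<Longrightarrow> inner a (reg_grad s a) = 0"
  unfolding kkt_def nonneg_vec_def inner_vec_def inner_real_def
  by (intro sum.neutral ballI) (metis less_eq_real_def mult_zero_left mult_zero_right)

lemma kkt_imp_le:
  assumes "kkt s a" "nonneg_vec b"
  shows "reg_obj X y k s a + 1/2 * inner (b - a) (M *v (b - a)) \<le> reg_obj X y k s b"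
proof -
  have "0 \<le> inner b (reg_grad s a)"
    using assms unfolding kkt_def nonneg_vec_def inner_vec_def by (intro sum_nonneg) simp
  then show ?thesis
    using reg_obj_diff[of s b a] kkt_complementarity[OF assms(1)] by (simp add: inner_diff_left)
qed

lemma kkt_unique:
  assumes "kkt s a" "kkt s b"
  shows "a = b"
proof (rule ccontr)
  assume "a \<noteq> b"
  then have "0 < inner (b - a) (M *v (b - a))" "0 < inner (a - b) (M *v (a - b))"
    using gram_pos_def unfolding positive_definite_def by auto
  moreover have "nonneg_vec a" "nonneg_vec b" using assms by (auto simp: kkt_def)
  ultimately show False using kkt_imp_le[OF assms(1)] kkt_imp_le[OF assms(2)] by fastforce
qed

lemma reg_obj_axis:
  "reg_obj X y k s (a + t *\<^sub>R axis i 1) - reg_obj X y k s a = t * reg_grad s a $ i + t^2 * M $ i $ i / 2"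
proof -
  have "(M *v axis i 1) $ i = M $ i $ i"
    by (metis cart_eq_inner_axis matrix_vector_mul_component)
  then show ?thesis
    using reg_obj_diff[of s "a + t *\<^sub>R axis i 1" a]
    by (simp add: matrix_vector_mult_scaleR inner_axis' power2_eq_square)
qed

lemma minimizer_imp_kkt:
  assumes "0 < s" "nonneg_vec a"
    and min: "\<And>b. nonneg_vec b \<Longrightarrow> reg_obj X y k s a \<le> reg_obj X y k s b"
  shows "kkt s a"
proof -
  have "0 \<le> reg_grad s a $ i \<and> (0 < a $ i \<longrightarrow> reg_grad s a $ i = 0)" for i
  proof -
    have "0 \<le> t * reg_grad s a $ i + t^2 * M $ i $ i / 2" if "- a $ i \<le> t" for t
    proof -
      have "nonneg_vec (a + t *\<^sub>R axis i 1)"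
        using assms(2) that by (auto simp: nonneg_vec_def axis_def)
      then show ?thesis using min reg_obj_axis[of s a t i] by fastforce
    qed
    moreover have "0 \<le> a $ i" using assms(2) by (simp add: nonneg_vec_def)
    ultimately show ?thesis
      using quadratic_nonneg_on_ray_kkt[OF positive_definite_diag_pos[OF gram_pos_def]] by blast
  qed
  then show ?thesis using assms(2) by (simp add: kkt_def nonneg_vec_def)
qed

lemma reg_obj_coercive:
  assumes "0 < s" "nonneg_vec b"
  shows "reg_obj X y k s 0 + norm b * (coercivity / 2 * norm b - norm r) \<le> reg_obj X y k s b"
proof -
  have "0 \<le> inner b k"
    using assms(2) k_pos unfolding nonneg_vec_def inner_vec_def by (intro sum_nonneg) (simp add: less_imp_le)
  then have "0 \<le> inner b k / s" using assms(1) by simp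
  moreover have "inner b r \<le> norm b * norm r" by (rule norm_cauchy_schwarz)
  moreover have "reg_obj X y k s b - reg_obj X y k s 0 = - inner b r + inner b k / s + 1/2 * inner b (M *v b)"
    using reg_obj_diff[of s b 0] by (simp add: reg_grad_def inner_add_right inner_diff_right)
  moreover have "norm b * (coercivity / 2 * norm b - norm r) = 1/2 * (coercivity * (norm b)^2) - norm b * norm r"
    by (simp add: power2_eq_square algebra_simps)
  ultimately show ?thesis using coercivity_le[of b] by linarith
qed

lemma reg_obj_has_minimizer:
  assumes "0 < s"
  obtains a where "nonneg_vec a" "\<And>b. nonneg_vec b \<Longrightarrow> reg_obj X y k s a \<le> reg_obj X y k s b"
proof -
  define R where "R = 2 * norm r / coercivity"
  define S where "S = {x. \<forall>i. 0 \<le> x $ i} \<inter> cball (0::real^'d) R"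
  have "compact S"
    unfolding S_def using closed_Int_compact[OF closed_positive_orthant compact_cball] by blast
  moreover have "0 \<in> S"
    using coercivity_pos by (simp add: S_def R_def)
  moreover have "continuous_on S (reg_obj X y k s)"
    unfolding reg_obj_def[abs_def] fobj_def
    by (intro continuous_intros linear_continuous_on matrix_vector_mul_bounded_linear)
  ultimately obtain a where a: "a \<in> S" "\<And>b. b \<in> S \<Longrightarrow> reg_obj X y k s a \<le> reg_obj X y k s b"
    using continuous_attains_inf[of S] by blast
  show thesis
  proof (rule that)
    show "nonneg_vec a" using a(1) by (simp add: S_def nonneg_vec_def)
    fix b :: "real^'d" assume b: "nonneg_vec b"
    show "reg_obj X y k s a \<le> reg_obj X y k s b"
    proof (cases "norm b \<le> R")
      case True then show ?thesis using a b by (simp add: S_def nonneg_vec_def)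
    next
      case False
      then have "norm r \<le> coercivity / 2 * norm b"
        using coercivity_pos by (simp add: R_def field_simps)
      then have "0 \<le> norm b * (coercivity / 2 * norm b - norm r)" by simp
      then show ?thesis
        using reg_obj_coercive[OF assms b] a(2)[OF \<open>0 \<in> S\<close>] by linarith
    qed
  qed
qed

lemma kkt_mu:
  assumes "0 < s"
  shows "kkt s (mu X y k s)"
proof -
  obtain a where a: "nonneg_vec a" "\<And>b. nonneg_vec b \<Longrightarrow> reg_obj X y k s a \<le> reg_obj X y k s b"
    using reg_obj_has_minimizer[OF assms] by blast
  have "kkt s a" using minimizer_imp_kkt[OF assms a] .
  moreover have "mu X y k s = a"
    unfolding mu_def
  proof (rule the_equality)
    show "nonneg_vec a \<and> (\<forall>\<theta>'. nonneg_vec \<theta>' \<longrightarrow> reg_obj X y k s a \<le> reg_obj X y k s \<theta>')"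
      using a by blast
    show "\<theta> = a" if "nonneg_vec \<theta> \<and> (\<forall>\<theta>'. nonneg_vec \<theta>' \<longrightarrow> reg_obj X y k s \<theta> \<le> reg_obj X y k s \<theta>')" for \<theta>
      using that minimizer_imp_kkt[OF assms] kkt_unique[OF _ \<open>kkt s a\<close>] by blast
  qed
  ultimately show ?thesis by simp
qed

lemma mu_nonneg: "0 < s \<Longrightarrow> 0 \<le> mu X y k s $ i"
  using kkt_mu by (simp add: kkt_def nonneg_vec_def)

lemma mu_mono:
  assumes "0 < s" "s \<le> s'"
  shows "mu X y k s $ i \<le> mu X y k s' $ i"
proof (rule Z_matrix_comparison[OF gram_Z_matrix gram_pos_def])
  fix j assume less: "mu X y k s' $ j < mu X y k s $ j"
  then have "reg_grad s (mu X y k s) $ j = 0"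
    using kkt_mu[OF assms(1)] mu_nonneg[of s' j] assms unfolding kkt_def by auto
  moreover have "0 \<le> reg_grad s' (mu X y k s') $ j"
    using kkt_mu[of s'] assms unfolding kkt_def nonneg_vec_def by auto
  moreover have "k $ j / s' \<le> k $ j / s"
    using assms k_pos by (intro divide_left_mono) (auto simp: less_imp_le)
  ultimately show "(M *v mu X y k s) $ j \<le> (M *v mu X y k s') $ j"
    by (simp add: reg_grad_def)
qed

lemma supp_mu_mono: "0 < s \<Longrightarrow> s \<le> s' \<Longrightarrow> supp_mu X y k s \<subseteq> supp_mu X y k s'"
  unfolding supp_mu_def using mu_mono by (auto intro: less_le_trans)

lemma finite_jump_points: "finite (jump_points X y k)"
  unfolding jump_points_def by (rule finite_jumps_of_mono_sets) (rule supp_mu_mono)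

lemma regular_point_constant_window:
  assumes "0 < s0" "s0 \<notin> jump_points X y k"
  obtains dl where "0 < dl"
    "\<And>s. s0 - 2 * dl \<le> s \<Longrightarrow> s \<le> s0 + 2 * dl \<Longrightarrow> 0 < s \<and> supp_mu X y k s = supp_mu X y k s0"
proof -
  obtain \<delta> where \<delta>: "0 < \<delta>" "\<And>s. 0 < s \<Longrightarrow> \<bar>s - s0\<bar> < \<delta> \<Longrightarrow> supp_mu X y k s = supp_mu X y k s0"
    using assms unfolding jump_points_def by blast
  define dl where "dl = min \<delta> s0 / 4"
  show thesis
  proof (rule that)
    show "0 < dl" using \<delta>(1) assms(1) by (simp add: dl_def)
    fix s assume "s0 - 2 * dl \<le> s" "s \<le> s0 + 2 * dl"
    moreover have "dl \<le> s0 / 4" "dl \<le> \<delta> / 4" by (auto simp: dl_def)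
    ultimately have "0 < s" "\<bar>s - s0\<bar> < \<delta>" using assms(1) \<delta>(1) by auto
    then show "0 < s \<and> supp_mu X y k s = supp_mu X y k s0" using \<delta>(2) by blast
  qed
qed

definition Phi :: "real \<Rightarrow> real^'d" where
  "Phi s = s *\<^sub>R mu X y k s"

text \<open>On the time scale \<open>t = s ln (1/\<epsilon>)\<close>, \<open>growth s R\<close> is the exponential rate of the
  trajectory when \<open>R\<close> is its rescaled integral (see \<open>sol_rescaled\<close>).\<close>
definition growth :: "real \<Rightarrow> real^'d \<Rightarrow> real^'d" where
  "growth s \<theta> = s *\<^sub>R r - k - M *v \<theta>"

lemma growth_Phi: "0 < s \<Longrightarrow> growth s (Phi s) = - s *\<^sub>R reg_grad s (mu X y k s)"
  by (simp add: growth_def Phi_def reg_grad_def matrix_vector_mult_scaleR algebra_simps)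

lemma growth_Phi_nonpos: "0 < s \<Longrightarrow> growth s (Phi s) $ i \<le> 0"
  using kkt_mu[of s] by (simp add: growth_Phi kkt_def nonneg_vec_def)

lemma growth_Phi_eq_0: "0 < s \<Longrightarrow> i \<in> supp_mu X y k s \<Longrightarrow> growth s (Phi s) $ i = 0"
  using kkt_mu[of s] by (simp add: growth_Phi kkt_def supp_mu_def)

lemma Phi_eq_0: "0 < s \<Longrightarrow> i \<notin> supp_mu X y k s \<Longrightarrow> Phi s $ i = 0"
  using mu_nonneg[of s i] by (simp add: Phi_def supp_mu_def)

lemma Phi_nonneg: "0 < s \<Longrightarrow> nonneg_vec (Phi s)"
  by (simp add: Phi_def nonneg_vec_def mu_nonneg)

lemma Phi_mono: "0 < s \<Longrightarrow> s \<le> s' \<Longrightarrow> Phi s $ i \<le> Phi s' $ i"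
  unfolding Phi_def using mu_mono[of s s' i] mu_nonneg[of s i] by (simp add: mult_mono)

lemma inner_Phi_growth_Phi: "0 < s \<Longrightarrow> inner (Phi s) (growth s (Phi s)) = 0"
  unfolding inner_vec_def inner_real_def
  by (intro sum.neutral ballI) (metis Phi_eq_0 growth_Phi_eq_0 mult_zero_left mult_zero_right)

text \<open>Turns the approximate KKT conditions satisfied by the rescaled integral into convergence.\<close>
lemma Phi_stability:
  assumes "0 < s" "nonneg_vec \<theta>"
  shows "inner (\<theta> - Phi s) (M *v (\<theta> - Phi s)) \<le> inner (Phi s - \<theta>) (growth s \<theta>)"
proof -
  have "M *v (\<theta> - Phi s) = growth s (Phi s) - growth s \<theta>"
    by (simp add: growth_def matrix_vector_mult_diff_distrib)
  then have "inner (\<theta> - Phi s) (M *v (\<theta> - Phi s))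
      = inner \<theta> (growth s (Phi s)) - inner (Phi s) (growth s (Phi s)) + inner (Phi s - \<theta>) (growth s \<theta>)"
    by (simp add: inner_diff_left inner_diff_right)
  moreover have "inner \<theta> (growth s (Phi s)) \<le> 0"
    unfolding inner_vec_def using assms growth_Phi_nonpos
    by (intro sum_nonpos) (simp add: mult_nonneg_nonpos nonneg_vec_def)
  ultimately show ?thesis using inner_Phi_growth_Phi[OF assms(1)] by simp
qed

lemma growth_Phi_off_support:
  assumes "0 < s" "s \<le> s'" "j \<notin> supp_mu X y k s'"
  shows "growth s (Phi s) $ j \<le> - ((s' - s) * r $ j)"
proof -
  have "j \<notin> supp_mu X y k s" using assms supp_mu_mono by blast
  then have "(M *v (Phi s' - Phi s)) $ j \<le> 0"
    using Z_matrix_mult_nonneg_le_diag[OF gram_Z_matrix, of "Phi s' - Phi s" j] Phi_mono[OF assms(1,2)]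
      Phi_eq_0[OF assms(1)] Phi_eq_0[of s' j] assms by (simp add: nonneg_vec_def)
  then have "(s' - s) * r $ j \<le> growth s' (Phi s') $ j - growth s (Phi s) $ j"
    by (simp add: growth_def matrix_vector_mult_diff_distrib algebra_simps)
  then show ?thesis using growth_Phi_nonpos[of s' j] assms by linarith
qed

lemma theta_star_eqI:
  assumes "\<And>i. i \<notin> I \<Longrightarrow> \<theta> $ i = 0" "\<And>i. i \<in> I \<Longrightarrow> (M *v \<theta>) $ i = r $ i"
  shows "theta_star X y I = \<theta>"
  unfolding theta_star_def
proof (rule the_equality)
  show "(\<forall>i. i \<notin> I \<longrightarrow> \<theta> $ i = 0) \<and> (\<forall>i\<in>I. (M *v \<theta>) $ i = r $ i)" using assms by blast
  fix v assume v: "(\<forall>i. i \<notin> I \<longrightarrow> v $ i = 0) \<and> (\<forall>i\<in>I. (M *v v) $ i = r $ i)"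
  have prod: "(v - \<theta>) $ i * (M *v (v - \<theta>)) $ i = 0" for i
    using v assms by (cases "i \<in> I") (auto simp: matrix_vector_mult_diff_distrib)
  have "inner (v - \<theta>) (M *v (v - \<theta>)) = 0"
    unfolding inner_vec_def inner_real_def by (intro sum.neutral ballI) (rule prod)
  then show "v = \<theta>" using gram_pos_def unfolding positive_definite_def
    by (metis less_irrefl right_minus_eq)
qed

text \<open>Where the support is constant, \<open>Phi\<close> is affine with slope \<open>theta_star\<close>.\<close>
lemma theta_star_constant_support:
  assumes "0 < s" "s < s'" "supp_mu X y k s = A" "supp_mu X y k s' = A"
  shows "nonneg_vec (theta_star X y A)"
    and "\<And>i. i \<notin> A \<Longrightarrow> theta_star X y A $ i = 0"
    and "\<And>i. i \<in> A \<Longrightarrow> (r - M *v theta_star X y A) $ i = 0"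
proof -
  define ts where "ts = (1 / (s' - s)) *\<^sub>R (Phi s' - Phi s)"
  have off: "ts $ i = 0" if "i \<notin> A" for i
    using that assms Phi_eq_0[of s i] Phi_eq_0[of s' i] by (simp add: ts_def)
  have on: "(M *v ts) $ i = r $ i" if "i \<in> A" for i
  proof -
    have "growth s (Phi s) $ i = 0" "growth s' (Phi s') $ i = 0"
      using that assms by (auto intro: growth_Phi_eq_0)
    then have "(M *v Phi s') $ i - (M *v Phi s) $ i = (s' - s) * r $ i"
      by (simp add: growth_def algebra_simps)
    moreover have "(M *v ts) $ i = ((M *v Phi s') $ i - (M *v Phi s) $ i) / (s' - s)"
      by (simp add: ts_def matrix_vector_mult_scaleR matrix_vector_mult_diff_distrib)
    ultimately show ?thesis using assms(2) by simp
  qed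
  have "theta_star X y A = ts" by (rule theta_star_eqI) (use off on in auto)
  moreover have "nonneg_vec ts"
    using Phi_mono[of s s'] assms by (simp add: ts_def nonneg_vec_def)
  ultimately show "nonneg_vec (theta_star X y A)" "\<And>i. i \<notin> A \<Longrightarrow> theta_star X y A $ i = 0"
    "\<And>i. i \<in> A \<Longrightarrow> (r - M *v theta_star X y A) $ i = 0"
    using off on by auto
qed

lemma constant_support_window:
  assumes "0 < dl"
    and const: "\<And>s. s0 - 2 * dl \<le> s \<Longrightarrow> s \<le> s0 + 2 * dl \<Longrightarrow> 0 < s \<and> supp_mu X y k s = A"
  shows "nonneg_vec (theta_star X y A)"
    and "\<And>i. i \<notin> A \<Longrightarrow> theta_star X y A $ i = 0"
    and "\<And>i. i \<in> A \<Longrightarrow> (r - M *v theta_star X y A) $ i = 0"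
    and "\<And>\<sigma> i. s0 - 2 * dl \<le> \<sigma> \<Longrightarrow> \<sigma> \<le> s0 + 2 * dl \<Longrightarrow> i \<in> A \<Longrightarrow> growth \<sigma> (Phi \<sigma>) $ i = 0"
    and "\<And>\<sigma> j. s0 - 2 * dl \<le> \<sigma> \<Longrightarrow> \<sigma> \<le> s0 + dl \<Longrightarrow> j \<notin> A \<Longrightarrow> growth \<sigma> (Phi \<sigma>) $ j \<le> - (dl * r $ j)"
proof -
  have ends: "0 < s0 - 2 * dl" "s0 - 2 * dl < s0 + 2 * dl"
    "supp_mu X y k (s0 - 2 * dl) = A" "supp_mu X y k (s0 + 2 * dl) = A"
    using const[of "s0 - 2 * dl"] const[of "s0 + 2 * dl"] assms(1) by auto
  show "nonneg_vec (theta_star X y A)" "\<And>i. i \<notin> A \<Longrightarrow> theta_star X y A $ i = 0"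
    "\<And>i. i \<in> A \<Longrightarrow> (r - M *v theta_star X y A) $ i = 0"
    using theta_star_constant_support[OF ends] by auto
  show "growth \<sigma> (Phi \<sigma>) $ i = 0" if "s0 - 2 * dl \<le> \<sigma>" "\<sigma> \<le> s0 + 2 * dl" "i \<in> A" for \<sigma> i
    using const[OF that(1,2)] that(3) by (intro growth_Phi_eq_0) auto
  show "growth \<sigma> (Phi \<sigma>) $ j \<le> - (dl * r $ j)" if "s0 - 2 * dl \<le> \<sigma>" "\<sigma> \<le> s0 + dl" "j \<notin> A" for \<sigma> j
  proof -
    have "growth \<sigma> (Phi \<sigma>) $ j \<le> - ((s0 + 2 * dl - \<sigma>) * r $ j)"
      using const[of \<sigma>] ends that by (intro growth_Phi_off_support) auto
    moreover have "dl * r $ j \<le> (s0 + 2 * dl - \<sigma>) * r $ j"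
      using that corr_pos[of j] by (intro mult_right_mono) auto
    ultimately show ?thesis by linarith
  qed
qed

end

section \<open>Trajectories of the diagonal linear network\<close>

context least_squares
begin

lemma inner_dln_field_nonpos:
  assumes "nonneg_vec v"
  shows "inner (dln_field X y v) (M *v v - r) \<le> 0"
proof -
  have "inner (dln_field X y v) (M *v v - r)
      = - (\<Sum>i\<in>UNIV. v $ i * (r $ i - (M *v v) $ i)^2)"
    by (simp add: inner_vec_def dln_field_def power2_eq_square sum_negf[symmetric] algebra_simps)
  also have "\<dots> \<le> 0" using assms by (simp add: sum_nonneg nonneg_vec_def)
  finally show ?thesis .
qed

lemma fobj_expand:
  assumes "inner \<theta>' (r - M *v \<theta>') = 0"
  shows "fobj X y \<theta> = fobj X y \<theta>' + 1/2 * inner (\<theta> - \<theta>') (M *v (\<theta> - \<theta>'))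
           - inner (r - M *v \<theta>') \<theta>"
  using assms inner_gram_commute[of \<theta> X \<theta>']
  by (simp add: fobj_def inner_diff_left inner_diff_right matrix_vector_mult_diff_distrib
      inner_commute[of "r"] inner_commute[of "M *v \<theta>'" \<theta>] algebra_simps)

end

locale dln_flow = least_squares X y
  for X :: "real^'d^'n" and y :: "real^'n" +
  fixes \<theta> :: "real \<Rightarrow> real^'d"
  assumes init_pos: "\<And>i. 0 < \<theta> 0 $ i"
    and flow: "\<And>t. 0 \<le> t \<Longrightarrow> (\<theta> has_vector_derivative dln_field X y (\<theta> t)) (at t within {0..})"
begin

lemma flow_at: "0 < t \<Longrightarrow> (\<theta> has_vector_derivative dln_field X y (\<theta> t)) (at t)"
  using flow[of t] at_within_interior[of t "{0..}"] by simp

lemma continuous_on_flow: "continuous_on {0..} \<theta>"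
  unfolding continuous_on_eq_continuous_within
  using flow has_vector_derivative_continuous by fastforce

lemma flow_component_deriv:
  "0 < t \<Longrightarrow> ((\<lambda>t. \<theta> t $ i) has_real_derivative \<theta> t $ i * (r $ i - (M *v \<theta> t) $ i)) (at t)"
  using bounded_linear.has_vector_derivative[OF bounded_linear_vec_nth flow_at, of t i]
  by (simp add: has_real_derivative_iff_has_vector_derivative dln_field_def)

lemma integral_flow_deriv_within:
  "0 \<le> t \<Longrightarrow> t \<le> T \<Longrightarrow> ((\<lambda>t. integral {0..t} \<theta>) has_vector_derivative \<theta> t) (at t within {0..T})"
  by (rule integral_has_vector_derivative) (auto intro: continuous_on_subset[OF continuous_on_flow])

lemma linear_integral_flow_deriv:
  assumes "bounded_linear f" "0 < t"
  shows "((\<lambda>t. f (integral {0..t} \<theta>)) has_real_derivative f (\<theta> t)) (at t)"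
proof -
  have "((\<lambda>t. integral {0..t} \<theta>) has_vector_derivative \<theta> t) (at t)"
    using integral_flow_deriv_within[of t "t + 1"] at_within_interior[of t "{0..t + 1}"] assms(2) by simp
  then show ?thesis
    using bounded_linear.has_vector_derivative[OF assms(1)]
    by (simp add: has_real_derivative_iff_has_vector_derivative)
qed

lemma continuous_on_linear_integral_flow:
  assumes "bounded_linear f"
  shows "continuous_on {0..T} (\<lambda>t. f (integral {0..t} \<theta>))"
proof -
  have "continuous_on {0..T} (\<lambda>t. integral {0..t} \<theta>)"
    unfolding continuous_on_eq_continuous_within
    using integral_flow_deriv_within has_vector_derivative_continuous by fastforce
  then show ?thesis
    by (rule continuous_on_compose2[OF linear_continuous_on[OF assms]]) auto
qed

lemma bounded_linear_gram_component: "bounded_linear (\<lambda>v. (M *v v) $ i)"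
  using bounded_linear_compose[OF bounded_linear_vec_nth matrix_vector_mul_bounded_linear] .

lemma flow_explicit:
  assumes "0 \<le> t"
  shows "\<theta> t $ i = \<theta> 0 $ i * exp (r $ i * t - (M *v integral {0..t} \<theta>) $ i)"
proof -
  define E where "E x = r $ i * x - (M *v integral {0..x} \<theta>) $ i" for x
  define h where "h x = \<theta> x $ i * exp (- E x)" for x
  have E_deriv: "(E has_real_derivative r $ i - (M *v \<theta> x) $ i) (at x)" if "0 < x" for x
    unfolding E_def
    by (intro DERIV_diff linear_integral_flow_deriv[OF bounded_linear_gram_component that])
      (auto intro!: derivative_eq_intros)
  have "h t = h 0"
  proof (cases "t = 0")
    case False
    show ?thesis
    proof (rule DERIV_isconst_end[of 0 t h])
      show "0 < t" using assms False by simp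
      show "continuous_on {0..t} h"
        unfolding h_def E_def
        by (intro continuous_intros continuous_on_linear_integral_flow bounded_linear_gram_component
            continuous_on_component continuous_on_subset[OF continuous_on_flow]) auto
      show "(h has_real_derivative 0) (at x)" if "0 < x" "x < t" for x
        unfolding h_def using flow_component_deriv E_deriv that
        by (auto intro!: derivative_eq_intros simp: algebra_simps)
    qed
  qed simp
  moreover have "E 0 = 0" by (simp add: E_def)
  ultimately have "\<theta> t $ i * exp (- E t) * exp (E t) = \<theta> 0 $ i * exp (E t)" by (simp add: h_def)
  then have "\<theta> t $ i = \<theta> 0 $ i * exp (E t)" by (simp add: mult.assoc flip: exp_add)
  then show ?thesis by (simp add: E_def)
qed

lemma flow_pos: "0 \<le> t \<Longrightarrow> 0 < \<theta> t $ i"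
  using flow_explicit[of t i] init_pos[of i] by simp

lemma flow_nonneg: "0 \<le> t \<Longrightarrow> nonneg_vec (\<theta> t)"
  using flow_pos by (simp add: nonneg_vec_def less_imp_le)

lemma fobj_flow_deriv:
  assumes "0 < t"
  shows "((\<lambda>t. fobj X y (\<theta> t)) has_real_derivative inner (dln_field X y (\<theta> t)) (M *v \<theta> t - r)) (at t)"
proof -
  define D where "D = dln_field X y (\<theta> t)"
  have "((\<lambda>t. M *v \<theta> t) has_vector_derivative M *v D) (at t)"
    unfolding D_def by (rule bounded_linear.has_vector_derivative[OF matrix_vector_mul_bounded_linear flow_at[OF assms]])
  then have "((\<lambda>t. inner (\<theta> t) (M *v \<theta> t)) has_real_derivative inner (\<theta> t) (M *v D) + inner D (M *v \<theta> t)) (at t)"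
    unfolding D_def has_real_derivative_iff_has_vector_derivative
    by (rule bounded_bilinear.has_vector_derivative[OF bounded_bilinear_inner flow_at[OF assms]])
  moreover have "((\<lambda>t. inner r (\<theta> t)) has_real_derivative inner r D) (at t)"
    unfolding D_def has_real_derivative_iff_has_vector_derivative
    by (rule bounded_linear.has_vector_derivative[OF bounded_linear_inner_right flow_at[OF assms]])
  ultimately have "((\<lambda>t. fobj X y (\<theta> t)) has_real_derivative
      (0 - inner r D + 1/2 * (inner (\<theta> t) (M *v D) + inner D (M *v \<theta> t)))) (at t)"
    unfolding fobj_def by (intro DERIV_add DERIV_diff DERIV_const DERIV_cmult)
  moreover have "0 - inner r D + 1/2 * (inner (\<theta> t) (M *v D) + inner D (M *v \<theta> t)) = inner D (M *v \<theta> t - r)"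
    using inner_gram_commute[of "\<theta> t" X D] by (simp add: inner_diff_right inner_commute)
  ultimately show ?thesis by (simp add: D_def)
qed

lemma fobj_flow_antimono:
  assumes "0 \<le> t" "t \<le> t'"
  shows "fobj X y (\<theta> t') \<le> fobj X y (\<theta> t)"
proof -
  have "fobj X y (\<theta> t') - fobj X y (\<theta> t) \<le> 0 * (t' - t)"
  proof (rule DERIV_le_imp_diff_le[OF assms(2)])
    show "continuous_on {t..t'} (\<lambda>t. fobj X y (\<theta> t))"
      unfolding fobj_def using assms
      by (intro continuous_intros continuous_on_subset[OF continuous_on_flow]
          linear_continuous_on[OF matrix_vector_mul_bounded_linear] continuous_on_compose2[of _ "(*v) M"]) auto
    show "((\<lambda>t. fobj X y (\<theta> t)) has_real_derivative inner (dln_field X y (\<theta> x)) (M *v \<theta> x - r)) (at x)"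
      if "t < x" for x using assms that by (intro fobj_flow_deriv) auto
    show "inner (dln_field X y (\<theta> x)) (M *v \<theta> x - r) \<le> 0" if "t < x" for x
      using assms that by (intro inner_dln_field_nonpos flow_nonneg) auto
  qed
  then show ?thesis by simp
qed

lemma integral_flow_component_diff_le:
  assumes "0 \<le> t" "t \<le> t'" "\<And>x. t < x \<Longrightarrow> x < t' \<Longrightarrow> \<theta> x $ i \<le> m"
  shows "integral {0..t'} \<theta> $ i - integral {0..t} \<theta> $ i \<le> m * (t' - t)"
  using assms
  by (intro DERIV_le_imp_diff_le[where f' = "\<lambda>x. \<theta> x $ i"] continuous_on_subset[OF continuous_on_linear_integral_flow]
      linear_integral_flow_deriv bounded_linear_vec_nth) auto

lemma integral_flow_component_mono:
  assumes "0 \<le> t" "t \<le> t'"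
  shows "integral {0..t} \<theta> $ i \<le> integral {0..t'} \<theta> $ i"
proof -
  have "0 * (t' - t) \<le> integral {0..t'} \<theta> $ i - integral {0..t} \<theta> $ i"
    using assms flow_pos[of _ i]
    by (intro DERIV_ge_imp_diff_ge[where f' = "\<lambda>x. \<theta> x $ i"] continuous_on_subset[OF continuous_on_linear_integral_flow]
        linear_integral_flow_deriv bounded_linear_vec_nth) (auto simp: less_imp_le)
  then show ?thesis by simp
qed

lemma lyapunov_deriv:
  assumes "0 < t"
  shows "((\<lambda>t. \<Sum>i\<in>UNIV. \<theta> t $ i - ts $ i * ln (\<theta> t $ i)) has_real_derivative
           inner (\<theta> t - ts) (r - M *v \<theta> t)) (at t)"
proof -
  have "((\<lambda>t. \<Sum>i\<in>UNIV. \<theta> t $ i - ts $ i * ln (\<theta> t $ i)) has_real_derivative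
      (\<Sum>i\<in>UNIV. \<theta> t $ i * (r $ i - (M *v \<theta> t) $ i)
         - ts $ i * (inverse (\<theta> t $ i) * (\<theta> t $ i * (r $ i - (M *v \<theta> t) $ i))))) (at t)"
    using assms flow_pos[of t]
    by (intro DERIV_sum DERIV_diff DERIV_cmult flow_component_deriv DERIV_chain2[OF DERIV_ln]) auto
  moreover have "(\<Sum>i\<in>UNIV. \<theta> t $ i * (r $ i - (M *v \<theta> t) $ i)
         - ts $ i * (inverse (\<theta> t $ i) * (\<theta> t $ i * (r $ i - (M *v \<theta> t) $ i))))
      = inner (\<theta> t - ts) (r - M *v \<theta> t)"
    unfolding inner_vec_def using assms flow_pos[of t]
    by (intro sum.cong) (auto simp: field_simps less_le)
  ultimately show ?thesis by simp
qed

lemma continuous_on_lyapunov: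
  "continuous_on {0..} (\<lambda>t. \<Sum>i\<in>UNIV. \<theta> t $ i - ts $ i * ln (\<theta> t $ i))"
  by (intro continuous_intros continuous_on_flow) (use flow_pos in \<open>fastforce simp: less_le\<close>)

text \<open>Lyapunov argument: if \<open>\<theta>\<close> stayed far from an equilibrium \<open>\<theta>'\<close> of the restricted problem
  while the coupling with the unstable directions \<open>r - M \<theta>'\<close> stays small, the function
  \<open>\<Sum>i. \<theta>_i - \<theta>'_i ln \<theta>_i\<close> would decrease by more than it can.\<close>
lemma flow_approaches_equilibrium:
  assumes "0 < t1" "t1 \<le> t2"
    and coercive: "\<And>v. c * (norm v)^2 \<le> inner v (M *v v)" and "0 \<le> c"
    and equilibrium: "inner \<theta>' (r - M *v \<theta>') = 0"
    and coupling: "\<And>t. t1 \<le> t \<Longrightarrow> t \<le> t2 \<Longrightarrow> inner (\<theta> t) (r - M *v \<theta>') \<le> \<tau>"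
    and gap: "(\<Sum>i\<in>UNIV. \<theta> t1 $ i - \<theta>' $ i * ln (\<theta> t1 $ i)) - (\<Sum>i\<in>UNIV. \<theta> t2 $ i - \<theta>' $ i * ln (\<theta> t2 $ i))
              < (c * g - \<tau>) * (t2 - t1)"
  shows "\<exists>t0\<in>{t1..t2}. (norm (\<theta> t0 - \<theta>'))^2 < g"
proof (rule ccontr)
  assume far: "\<not> ?thesis"
  have "(\<Sum>i\<in>UNIV. \<theta> t2 $ i - \<theta>' $ i * ln (\<theta> t2 $ i)) - (\<Sum>i\<in>UNIV. \<theta> t1 $ i - \<theta>' $ i * ln (\<theta> t1 $ i))
      \<le> (\<tau> - c * g) * (t2 - t1)"
  proof (rule DERIV_le_imp_diff_le[OF assms(2)])
    show "continuous_on {t1..t2} (\<lambda>t. \<Sum>i\<in>UNIV. \<theta> t $ i - \<theta>' $ i * ln (\<theta> t $ i))"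
      using assms(1) by (intro continuous_on_subset[OF continuous_on_lyapunov]) auto
    fix x assume x: "t1 < x" "x < t2"
    show "((\<lambda>t. \<Sum>i\<in>UNIV. \<theta> t $ i - \<theta>' $ i * ln (\<theta> t $ i)) has_real_derivative
        inner (\<theta> x - \<theta>') (r - M *v \<theta> x)) (at x)"
      using x assms(1) by (intro lyapunov_deriv) auto
    define e where "e = r - M *v \<theta>'"
    define d where "d = \<theta> x - \<theta>'"
    have "r - M *v \<theta> x = e - M *v d"
      by (simp add: e_def d_def matrix_vector_mult_diff_distrib)
    then have "inner (\<theta> x - \<theta>') (r - M *v \<theta> x)
        = inner (\<theta> x) (r - M *v \<theta>') - inner \<theta>' (r - M *v \<theta>') - inner (\<theta> x - \<theta>') (M *v (\<theta> x - \<theta>'))"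
      by (simp add: inner_diff_right flip: e_def d_def) (simp add: d_def inner_diff_left)
    moreover have "g \<le> (norm (\<theta> x - \<theta>'))^2"
      using far x by (meson atLeastAtMost_iff less_imp_le not_less)
    then have "c * g \<le> inner (\<theta> x - \<theta>') (M *v (\<theta> x - \<theta>'))"
      using \<open>0 \<le> c\<close> by (intro order.trans[OF mult_left_mono coercive])
    ultimately show "inner (\<theta> x - \<theta>') (r - M *v \<theta> x) \<le> \<tau> - c * g"
      using coupling[of x] x equilibrium by simp
  qed
  then show False using gap by (simp add: algebra_simps)
qed

lemma flow_energy_distance:
  assumes equilibrium: "inner \<theta>' (r - M *v \<theta>') = 0" and "0 \<le> t0" "t0 \<le> t"
  shows "inner (\<theta> t - \<theta>') (M *v (\<theta> t - \<theta>'))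
    \<le> inner (\<theta> t0 - \<theta>') (M *v (\<theta> t0 - \<theta>')) + 2 * inner (r - M *v \<theta>') (\<theta> t) - 2 * inner (r - M *v \<theta>') (\<theta> t0)"
  using fobj_flow_antimono[OF assms(2,3)] fobj_expand[OF equilibrium, of "\<theta> t"] fobj_expand[OF equilibrium, of "\<theta> t0"]
  by simp

end

section \<open>Rescaled trajectories\<close>

locale dln = dln_problem X y k
  for X :: "real^'d^'n" and y :: "real^'n" and k :: "real^'d" +
  fixes C :: "real^'d" and sol :: "real \<Rightarrow> real \<Rightarrow> real^'d"
  assumes C_pos: "\<And>i. 0 < C $ i"
    and sol_init: "\<And>\<epsilon>. 0 < \<epsilon> \<Longrightarrow> sol \<epsilon> 0 = (\<chi> i. C $ i * \<epsilon> powr (k $ i))"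
    and sol_ode: "\<And>\<epsilon> t. 0 < \<epsilon> \<Longrightarrow> 0 \<le> t \<Longrightarrow>
      (sol \<epsilon> has_vector_derivative dln_field X y (sol \<epsilon> t)) (at t within {0..})"
begin

lemma dln_flow_sol: "0 < \<epsilon> \<Longrightarrow> dln_flow X y (sol \<epsilon>)"
  unfolding dln_flow_def using sol_init sol_ode C_pos by simp

definition sol_bound :: real where
  "sol_bound = (2 * norm r + gram_norm * (norm C)^2) / coercivity + 1"

lemma sol_bound_pos: "0 < sol_bound"
proof -
  have "0 \<le> (2 * norm r + gram_norm * (norm C)^2) / coercivity"
    using coercivity_pos gram_norm_nonneg by (intro divide_nonneg_nonneg) auto
  then show ?thesis by (simp add: sol_bound_def)
qed

text \<open>Energy decay bounds the whole family of trajectories uniformly, since the initial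
  energies are bounded uniformly for \<open>\<epsilon> \<le> 1\<close>.\<close>
lemma norm_sol_le:
  assumes "0 < \<epsilon>" "\<epsilon> \<le> 1" "0 \<le> t"
  shows "norm (sol \<epsilon> t) \<le> sol_bound"
proof -
  interpret dln_flow X y "sol \<epsilon>" using dln_flow_sol[OF assms(1)] .
  have "\<bar>sol \<epsilon> 0 $ i\<bar> \<le> \<bar>C $ i\<bar>" for i
    using sol_init[OF assms(1)] C_pos[of i] assms(1,2) k_pos[of i]
    by (simp add: abs_mult powr_le1 less_imp_le mult_left_le)
  then have init: "norm (sol \<epsilon> 0) \<le> norm C" by (intro norm_le_componentwise_cart) simp
  have "0 \<le> inner r (sol \<epsilon> 0)"
    using flow_nonneg[of 0] corr_pos unfolding inner_vec_def nonneg_vec_def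
    by (intro sum_nonneg) (simp add: less_imp_le)
  moreover have "inner (sol \<epsilon> 0) (M *v sol \<epsilon> 0) \<le> gram_norm * (norm C)^2"
    using inner_gram_le[of "sol \<epsilon> 0"] gram_norm_nonneg power_mono[OF init norm_ge_zero, of 2]
      mult_left_mono by (meson order.trans)
  moreover have "fobj X y (sol \<epsilon> t) \<le> fobj X y (sol \<epsilon> 0)"
    using fobj_flow_antimono[OF order_refl assms(3)] .
  moreover have "inner r (sol \<epsilon> t) \<le> norm r * norm (sol \<epsilon> t)"
    by (rule norm_cauchy_schwarz)
  ultimately have "coercivity * (norm (sol \<epsilon> t))^2 \<le> 2 * norm r * norm (sol \<epsilon> t) + gram_norm * (norm C)^2"
    using coercivity_le[of "sol \<epsilon> t"] by (simp add: fobj_def)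
  then show ?thesis
    unfolding sol_bound_def using coercivity_pos gram_norm_nonneg
    by (intro quadratic_le_imp_le) auto
qed

lemma sol_le_bound: "0 < \<epsilon> \<Longrightarrow> \<epsilon> \<le> 1 \<Longrightarrow> 0 \<le> t \<Longrightarrow> sol \<epsilon> t $ i \<le> sol_bound"
  using component_le_norm_cart[of "sol \<epsilon> t" i] norm_sol_le[of \<epsilon> t] by linarith

definition rescaled_integral :: "real \<Rightarrow> real \<Rightarrow> real^'d" where
  "rescaled_integral \<epsilon> s = (1 / ln (1/\<epsilon>)) *\<^sub>R integral {0..s * ln (1/\<epsilon>)} (sol \<epsilon>)"

lemma rescaled_integral_0: "rescaled_integral \<epsilon> 0 = 0"
  by (simp add: rescaled_integral_def)

lemma growth_rescaled_integral_component:
  "growth s (rescaled_integral \<epsilon> s) $ i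
     = s * r $ i - k $ i - (M *v integral {0..s * ln (1/\<epsilon>)} (sol \<epsilon>)) $ i / ln (1/\<epsilon>)"
  by (simp add: growth_def rescaled_integral_def matrix_vector_mult_scaleR)

lemma sol_rescaled:
  assumes "0 < \<epsilon>" "\<epsilon> < 1" "0 \<le> s"
  shows "sol \<epsilon> (s * ln (1/\<epsilon>)) $ i = C $ i * exp (ln (1/\<epsilon>) * growth s (rescaled_integral \<epsilon> s) $ i)"
proof -
  interpret dln_flow X y "sol \<epsilon>" using dln_flow_sol assms(1) .
  define L where "L = ln (1/\<epsilon>)"
  have L: "0 < L" using assms by (simp add: L_def)
  have init: "sol \<epsilon> 0 $ i = C $ i * exp (- (k $ i * L))"
    using sol_init[OF assms(1)] assms(1) by (simp add: L_def powr_def ln_div)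
  have eq: "L * growth s (rescaled_integral \<epsilon> s) $ i
      = - (k $ i * L) + (r $ i * (s * L) - (M *v integral {0..s * L} (sol \<epsilon>)) $ i)"
    using L by (simp add: growth_rescaled_integral_component flip: L_def) (simp add: algebra_simps)
  have "sol \<epsilon> (s * L) $ i = sol \<epsilon> 0 $ i * exp (r $ i * (s * L) - (M *v integral {0..s * L} (sol \<epsilon>)) $ i)"
    using flow_explicit[of "s * L" i] L assms(3) by simp
  also have "\<dots> = C $ i * exp (L * growth s (rescaled_integral \<epsilon> s) $ i)"
    by (simp only: init eq exp_add mult.assoc)
  finally show ?thesis by (simp add: L_def)
qed

lemma growth_rescaled_integral_le:
  assumes "0 < \<epsilon>" "\<epsilon> < 1" "0 \<le> s"
  shows "growth s (rescaled_integral \<epsilon> s) $ i \<le> ln (sol_bound / C $ i) / ln (1/\<epsilon>)"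
proof -
  have L: "0 < ln (1/\<epsilon>)" using assms by simp
  have "C $ i * exp (ln (1/\<epsilon>) * growth s (rescaled_integral \<epsilon> s) $ i) \<le> sol_bound"
    using sol_le_bound[of \<epsilon> "s * ln (1/\<epsilon>)" i] sol_rescaled[OF assms] assms L by simp
  then have "exp (ln (1/\<epsilon>) * growth s (rescaled_integral \<epsilon> s) $ i) \<le> sol_bound / C $ i"
    using C_pos[of i] by (simp add: field_simps)
  then have "ln (1/\<epsilon>) * growth s (rescaled_integral \<epsilon> s) $ i \<le> ln (sol_bound / C $ i)"
    using C_pos[of i] sol_bound_pos by (subst ln_ge_iff) auto
  then show ?thesis using L by (simp add: field_simps)
qed

lemma rescaled_integral_component_diff_le:
  assumes "0 < \<epsilon>" "\<epsilon> < 1" "0 \<le> s" "s \<le> s'"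
    and bound: "\<And>x. s < x \<Longrightarrow> x < s' \<Longrightarrow> sol \<epsilon> (x * ln (1/\<epsilon>)) $ i \<le> m"
  shows "rescaled_integral \<epsilon> s' $ i - rescaled_integral \<epsilon> s $ i \<le> m * (s' - s)"
proof -
  interpret dln_flow X y "sol \<epsilon>" using dln_flow_sol assms(1) .
  define L where "L = ln (1/\<epsilon>)"
  have L: "0 < L" using assms by (simp add: L_def)
  have "integral {0..s' * L} (sol \<epsilon>) $ i - integral {0..s * L} (sol \<epsilon>) $ i \<le> m * (s' * L - s * L)"
  proof (rule integral_flow_component_diff_le)
    show "0 \<le> s * L" "s * L \<le> s' * L" using assms L by (auto intro: mult_right_mono)
    fix x assume x: "s * L < x" "x < s' * L"
    have "s < x / L" "x / L < s'" using x L by (auto simp: field_simps)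
    then have "sol \<epsilon> (x / L * ln (1/\<epsilon>)) $ i \<le> m" by (rule bound)
    then show "sol \<epsilon> x $ i \<le> m" using L by (simp add: L_def[symmetric])
  qed
  then show ?thesis
    using L by (simp add: rescaled_integral_def diff_divide_distrib[symmetric] field_simps flip: L_def)
qed

lemma rescaled_integral_mono:
  assumes "0 < \<epsilon>" "\<epsilon> < 1" "0 \<le> s" "s \<le> s'"
  shows "rescaled_integral \<epsilon> s $ i \<le> rescaled_integral \<epsilon> s' $ i"
proof -
  interpret dln_flow X y "sol \<epsilon>" using dln_flow_sol assms(1) .
  have "integral {0..s * ln (1/\<epsilon>)} (sol \<epsilon>) $ i \<le> integral {0..s' * ln (1/\<epsilon>)} (sol \<epsilon>) $ i"
    using assms by (intro integral_flow_component_mono mult_right_mono) auto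
  then show ?thesis using assms by (simp add: rescaled_integral_def divide_right_mono)
qed

lemma rescaled_integral_nonneg: "0 < \<epsilon> \<Longrightarrow> \<epsilon> < 1 \<Longrightarrow> 0 \<le> s \<Longrightarrow> nonneg_vec (rescaled_integral \<epsilon> s)"
  using rescaled_integral_mono[of \<epsilon> 0 s] by (simp add: nonneg_vec_def rescaled_integral_0)

lemma rescaled_integral_le:
  assumes "0 < \<epsilon>" "\<epsilon> < 1" "0 \<le> s"
  shows "rescaled_integral \<epsilon> s $ i \<le> s * sol_bound"
  using rescaled_integral_component_diff_le[OF assms(1,2) order_refl assms(3), of i sol_bound]
    sol_le_bound[of \<epsilon> _ i] assms
  by (simp add: rescaled_integral_0 mult.commute)

lemma continuous_on_growth_rescaled_integral:
  assumes "0 < \<epsilon>" "\<epsilon> < 1"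
  shows "continuous_on {0..S} (\<lambda>s. growth s (rescaled_integral \<epsilon> s) $ i)"
proof -
  interpret dln_flow X y "sol \<epsilon>" using dln_flow_sol assms(1) .
  have L: "0 < ln (1/\<epsilon>)" using assms by simp
  have "continuous_on {0..S} (\<lambda>s. (M *v integral {0..s * ln (1/\<epsilon>)} (sol \<epsilon>)) $ i)"
    using L by (intro continuous_on_compose2[OF continuous_on_linear_integral_flow[OF bounded_linear_gram_component,
        where T = "S * ln (1/\<epsilon>)"]] continuous_intros) (auto intro: mult_right_mono)
  then show ?thesis
    unfolding growth_rescaled_integral_component using L
    by (intro continuous_on_diff continuous_on_divide) (auto intro!: continuous_intros)
qed

lemma growth_rescaled_integral_diag_mono:
  assumes "0 < \<epsilon>" "\<epsilon> < 1" "0 \<le> s'" "s' \<le> s"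
  shows "growth s' (rescaled_integral \<epsilon> s') $ i + M $ i $ i * rescaled_integral \<epsilon> s' $ i
    \<le> growth s (rescaled_integral \<epsilon> s) $ i + M $ i $ i * rescaled_integral \<epsilon> s $ i"
proof -
  have "nonneg_vec (rescaled_integral \<epsilon> s - rescaled_integral \<epsilon> s')"
    using rescaled_integral_mono[OF assms] by (simp add: nonneg_vec_def)
  then have "(M *v (rescaled_integral \<epsilon> s - rescaled_integral \<epsilon> s')) $ i
      \<le> M $ i $ i * (rescaled_integral \<epsilon> s - rescaled_integral \<epsilon> s') $ i"
    by (rule Z_matrix_mult_nonneg_le_diag[OF gram_Z_matrix])
  moreover have "0 \<le> (s - s') * r $ i" using assms corr_pos[of i] by simp
  ultimately show ?thesis
    by (simp add: growth_def matrix_vector_mult_diff_distrib algebra_simps)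
qed

lemma rescaled_integral_increment_le:
  assumes \<epsilon>: "0 < \<epsilon>" "\<epsilon> < 1" and "0 \<le> s0" "s0 \<le> s"
    and below: "\<And>x. s0 < x \<Longrightarrow> x < s \<Longrightarrow> growth x (rescaled_integral \<epsilon> x) $ i < - \<rho> / 2"
  shows "rescaled_integral \<epsilon> s $ i - rescaled_integral \<epsilon> s0 $ i \<le> C $ i * exp (- (ln (1/\<epsilon>) * (\<rho>/2))) * (s - s0)"
proof (rule rescaled_integral_component_diff_le[OF \<epsilon> assms(3,4)])
  fix x assume x: "s0 < x" "x < s"
  have "ln (1/\<epsilon>) * growth x (rescaled_integral \<epsilon> x) $ i \<le> ln (1/\<epsilon>) * - (\<rho>/2)"
    using below[OF x] \<epsilon> by (intro mult_left_mono) auto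
  then show "sol \<epsilon> (x * ln (1/\<epsilon>)) $ i \<le> C $ i * exp (- (ln (1/\<epsilon>) * (\<rho>/2)))"
    using sol_rescaled[OF \<epsilon>, of x i] x assms(3) C_pos[of i] by simp
qed

text \<open>While \<open>growth_i < -\<rho>/2\<close> the coordinate \<open>i\<close> is exponentially small, and
  \<open>growth_i + M_ii R_i\<close> is nondecreasing; so \<open>growth_i\<close> cannot have dropped by \<open>\<rho>/2\<close>
  since it was last above \<open>-\<rho>/2\<close>.\<close>
lemma rescaled_integral_small:
  assumes \<epsilon>: "0 < \<epsilon>" "\<epsilon> < 1" and s: "0 < s" "s \<le> S"
    and small: "M $ i $ i * (S * C $ i * exp (- (ln (1/\<epsilon>) * (\<rho>/2)))) < \<rho> / 2"
    and low: "growth s (rescaled_integral \<epsilon> s) $ i < - \<rho>"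
  shows "rescaled_integral \<epsilon> s $ i \<le> S * C $ i * exp (- (ln (1/\<epsilon>) * (\<rho>/2)))"
proof -
  define m where "m = C $ i * exp (- (ln (1/\<epsilon>) * (\<rho>/2)))"
  define w where "w x = growth x (rescaled_integral \<epsilon> x) $ i" for x
  have "0 \<le> m" using C_pos[of i] by (simp add: m_def less_imp_le)
  then have mono: "m * (s - s0) \<le> m * S" if "0 \<le> s0" for s0
    using that s by (intro mult_left_mono) auto
  define P where "P = {0..s} \<inter> w -` {- \<rho> / 2..}"
  show ?thesis
  proof (cases "P = {}")
    case True
    then have "rescaled_integral \<epsilon> s $ i - rescaled_integral \<epsilon> 0 $ i \<le> m * (s - 0)"
      unfolding m_def using s
      by (intro rescaled_integral_increment_le[OF \<epsilon>]) (auto simp: P_def w_def not_le disjoint_iff)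
    then show ?thesis using mono[of 0] by (simp add: rescaled_integral_0 m_def mult_ac)
  next
    case False
    have "closed P"
      unfolding P_def w_def by (intro continuous_closed_preimage continuous_on_growth_rescaled_integral \<epsilon>) auto
    moreover have "bdd_above P" unfolding P_def by (auto intro: bdd_aboveI[of _ s])
    ultimately have s0: "Sup P \<in> P" using closed_contains_Sup False by blast
    have "rescaled_integral \<epsilon> s $ i - rescaled_integral \<epsilon> (Sup P) $ i \<le> m * (s - Sup P)"
      unfolding m_def
    proof (rule rescaled_integral_increment_le[OF \<epsilon>])
      show "0 \<le> Sup P" "Sup P \<le> s" using s0 by (auto simp: P_def)
      fix x assume "Sup P < x" "x < s"
      then have "x \<notin> P" using cSup_upper[OF _ \<open>bdd_above P\<close>] by fastforce
      then show "growth x (rescaled_integral \<epsilon> x) $ i < - \<rho> / 2"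
        using \<open>Sup P < x\<close> \<open>x < s\<close> s0 by (auto simp: P_def w_def)
    qed
    then have "M $ i $ i * (rescaled_integral \<epsilon> s $ i - rescaled_integral \<epsilon> (Sup P) $ i) \<le> M $ i $ i * (m * S)"
      using positive_definite_diag_pos[OF gram_pos_def, of i] mono[of "Sup P"] s0
      by (intro mult_left_mono) (auto simp: P_def)
    also have "\<dots> < \<rho> / 2" using small by (simp add: m_def mult_ac)
    finally have "M $ i $ i * (rescaled_integral \<epsilon> s $ i - rescaled_integral \<epsilon> (Sup P) $ i) < \<rho> / 2" .
    moreover have "w (Sup P) + M $ i $ i * rescaled_integral \<epsilon> (Sup P) $ i
        \<le> w s + M $ i $ i * rescaled_integral \<epsilon> s $ i"
      unfolding w_def using s0 by (intro growth_rescaled_integral_diag_mono \<epsilon>) (auto simp: P_def)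
    ultimately show ?thesis using s0 low by (auto simp: P_def w_def algebra_simps)
  qed
qed

lemma neg_rescaled_integral_growth_le:
  assumes \<epsilon>: "0 < \<epsilon>" "\<epsilon> < 1" and s: "0 < s" "s \<le> S" and "0 < \<rho>"
    and small: "M $ i $ i * (S * C $ i * exp (- (ln (1/\<epsilon>) * (\<rho>/2)))) < \<rho> / 2"
  shows "- (rescaled_integral \<epsilon> s $ i * growth s (rescaled_integral \<epsilon> s) $ i)
    \<le> S * sol_bound * \<rho> + S * C $ i * exp (- (ln (1/\<epsilon>) * (\<rho>/2))) * (k $ i + \<rho> / 2)"
proof -
  define R where "R = rescaled_integral \<epsilon> s"
  define \<tau> where "\<tau> = S * C $ i * exp (- (ln (1/\<epsilon>) * (\<rho>/2)))"
  have R: "0 \<le> R $ i" "R $ i \<le> S * sol_bound"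
    using rescaled_integral_nonneg[OF \<epsilon>, of s] rescaled_integral_le[OF \<epsilon>, of s i] s sol_bound_pos
    by (auto simp: R_def nonneg_vec_def intro: order.trans[OF _ mult_right_mono])
  have \<tau>: "0 \<le> \<tau>" using C_pos[of i] s by (simp add: \<tau>_def)
  show ?thesis
  proof (cases "growth s R $ i < - \<rho>")
    case True
    have "R $ i \<le> \<tau>"
      unfolding R_def \<tau>_def by (rule rescaled_integral_small[OF \<epsilon> s small]) (use True R_def in simp)
    moreover have "(M *v R) $ i \<le> M $ i $ i * R $ i"
      using rescaled_integral_nonneg[OF \<epsilon>, of s] s
      by (intro Z_matrix_mult_nonneg_le_diag[OF gram_Z_matrix]) (simp add: R_def)
    moreover have "M $ i $ i * R $ i \<le> M $ i $ i * \<tau>"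
      using \<open>R $ i \<le> \<tau>\<close> positive_definite_diag_pos[OF gram_pos_def, of i] by (intro mult_left_mono) auto
    moreover have "M $ i $ i * \<tau> < \<rho> / 2" using small by (simp add: \<tau>_def)
    moreover have "0 \<le> s * r $ i" using s corr_pos[of i] by simp
    ultimately have "- growth s R $ i \<le> k $ i + \<rho> / 2"
      by (simp add: growth_def)
    then have "R $ i * (- growth s R $ i) \<le> \<tau> * (k $ i + \<rho> / 2)"
      using True R(1) \<open>R $ i \<le> \<tau>\<close> \<open>0 < \<rho>\<close> by (intro mult_mono) auto
    moreover have "0 \<le> S * sol_bound * \<rho>" using s sol_bound_pos \<open>0 < \<rho>\<close> by simp
    ultimately show ?thesis by (simp add: R_def \<tau>_def)
  next
    case False
    then have "R $ i * (- growth s R $ i) \<le> R $ i * \<rho>"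
      using R by (intro mult_left_mono) auto
    also have "\<dots> \<le> S * sol_bound * \<rho>"
      using R \<open>0 < \<rho>\<close> by (intro mult_right_mono) auto
    finally have "R $ i * (- growth s R $ i) \<le> S * sol_bound * \<rho>" .
    moreover have "0 \<le> \<tau> * (k $ i + \<rho> / 2)" using \<tau> k_pos[of i] \<open>0 < \<rho>\<close> by simp
    ultimately show ?thesis by (simp add: R_def \<tau>_def)
  qed
qed

lemma Phi_growth_rescaled_integral_le:
  assumes \<epsilon>: "0 < \<epsilon>" "\<epsilon> < 1" and s: "0 < s" "s \<le> S"
  shows "Phi s $ i * growth s (rescaled_integral \<epsilon> s) $ i \<le> Phi S $ i * \<bar>ln (sol_bound / C $ i)\<bar> / ln (1/\<epsilon>)"
proof -
  have L: "0 < ln (1/\<epsilon>)" using \<epsilon> by simp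
  have "Phi s $ i * growth s (rescaled_integral \<epsilon> s) $ i \<le> Phi s $ i * (\<bar>ln (sol_bound / C $ i)\<bar> / ln (1/\<epsilon>))"
    using growth_rescaled_integral_le[OF \<epsilon>, of s i] Phi_nonneg[of s] s L
    by (intro mult_left_mono order.trans[OF _ divide_right_mono[OF abs_ge_self]]) (auto simp: nonneg_vec_def)
  also have "\<dots> \<le> Phi S $ i * (\<bar>ln (sol_bound / C $ i)\<bar> / ln (1/\<epsilon>))"
    using Phi_mono[of s S i] s L by (intro mult_right_mono) auto
  finally show ?thesis by simp
qed

lemma rescaled_integral_error:
  assumes \<epsilon>: "0 < \<epsilon>" "\<epsilon> < 1" and s: "0 < s" "s \<le> S" and "0 < \<rho>"
    and small: "\<And>i. M $ i $ i * (S * C $ i * exp (- (ln (1/\<epsilon>) * (\<rho>/2)))) < \<rho> / 2"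
  shows "coercivity * (norm (rescaled_integral \<epsilon> s - Phi s))^2
    \<le> real CARD('d) * (S * sol_bound * \<rho>)
       + (\<Sum>i\<in>UNIV. S * C $ i * exp (- (ln (1/\<epsilon>) * (\<rho>/2))) * (k $ i + \<rho> / 2)
                    + Phi S $ i * \<bar>ln (sol_bound / C $ i)\<bar> / ln (1/\<epsilon>))"
proof -
  define R where "R = rescaled_integral \<epsilon> s"
  have "coercivity * (norm (R - Phi s))^2 \<le> inner (R - Phi s) (M *v (R - Phi s))"
    by (rule coercivity_le)
  also have "\<dots> \<le> inner (Phi s - R) (growth s R)"
    using Phi_stability[OF s(1)] rescaled_integral_nonneg[OF \<epsilon>, of s] s by (simp add: R_def)
  also have "\<dots> = (\<Sum>i\<in>UNIV. - (R $ i * growth s R $ i) + Phi s $ i * growth s R $ i)"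
    unfolding inner_vec_def by (simp add: algebra_simps)
  also have "\<dots> \<le> (\<Sum>i\<in>UNIV. S * sol_bound * \<rho>
      + (S * C $ i * exp (- (ln (1/\<epsilon>) * (\<rho>/2))) * (k $ i + \<rho> / 2)
         + Phi S $ i * \<bar>ln (sol_bound / C $ i)\<bar> / ln (1/\<epsilon>)))"
  proof (rule sum_mono)
    fix i
    show "- (R $ i * growth s R $ i) + Phi s $ i * growth s R $ i \<le> S * sol_bound * \<rho>
      + (S * C $ i * exp (- (ln (1/\<epsilon>) * (\<rho>/2))) * (k $ i + \<rho> / 2)
         + Phi S $ i * \<bar>ln (sol_bound / C $ i)\<bar> / ln (1/\<epsilon>))"
      using neg_rescaled_integral_growth_le[OF \<epsilon> s \<open>0 < \<rho>\<close> small[of i]]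
        Phi_growth_rescaled_integral_le[OF \<epsilon> s, of i] unfolding R_def by linarith
  qed
  finally show ?thesis by (simp add: R_def sum.distrib)
qed

lemma eventually_diag_small:
  assumes "0 < \<rho>"
  shows "eventually (\<lambda>\<epsilon>. \<forall>i. M $ i $ i * (S * C $ i * exp (- (ln (1/\<epsilon>) * (\<rho>/2)))) < \<rho> / 2) (at_right 0)"
proof (rule eventually_all_finite)
  fix i
  have "((\<lambda>\<epsilon>. M $ i $ i * (S * C $ i * exp (- (ln (1/\<epsilon>) * (\<rho>/2))))) \<longlongrightarrow> M $ i $ i * (S * C $ i * 0)) (at_right 0)"
    using assms by (intro tendsto_intros tendsto_exp_ln_inverse_at_right_0) simp
  then show "eventually (\<lambda>\<epsilon>. M $ i $ i * (S * C $ i * exp (- (ln (1/\<epsilon>) * (\<rho>/2)))) < \<rho> / 2) (at_right 0)"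
    using assms by (intro order_tendstoD) auto
qed

lemma rescaled_integral_tendsto_Phi:
  assumes "0 < S" "0 < e"
  shows "eventually (\<lambda>\<epsilon>. \<forall>s\<in>{0<..S}. norm (rescaled_integral \<epsilon> s - Phi s) < e) (at_right 0)"
proof -
  define d where "d = real CARD('d) * S * sol_bound"
  define \<rho> where "\<rho> = coercivity * e^2 / (2 * (d + 1))"
  define E where "E \<epsilon> = (\<Sum>i\<in>UNIV. S * C $ i * exp (- (ln (1/\<epsilon>) * (\<rho>/2))) * (k $ i + \<rho> / 2)
                    + Phi S $ i * \<bar>ln (sol_bound / C $ i)\<bar> * (1 / ln (1/\<epsilon>)))" for \<epsilon>
  have d: "0 \<le> d" using assms sol_bound_pos by (simp add: d_def)
  have \<rho>: "0 < \<rho>" using coercivity_pos assms d by (simp add: \<rho>_def)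
  have "d * \<rho> = coercivity * e^2 / 2 * (d / (d + 1))" using d by (simp add: \<rho>_def field_simps)
  also have "\<dots> < coercivity * e^2 / 2" using d coercivity_pos assms by (simp add: field_simps)
  finally have d\<rho>: "d * \<rho> < coercivity * e^2 / 2" .
  have exp_lim: "((\<lambda>\<epsilon>. exp (- (ln (1/\<epsilon>) * (\<rho>/2)))) \<longlongrightarrow> 0) (at_right 0)"
    using \<rho> by (intro tendsto_exp_ln_inverse_at_right_0) simp
  have "(E \<longlongrightarrow> (\<Sum>i\<in>UNIV. S * C $ i * 0 * (k $ i + \<rho> / 2) + Phi S $ i * \<bar>ln (sol_bound / C $ i)\<bar> * 0)) (at_right 0)"
    unfolding E_def[abs_def] by (intro tendsto_intros exp_lim tendsto_inverse_ln_inverse_at_right_0)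
  then have "eventually (\<lambda>\<epsilon>. E \<epsilon> < coercivity * e^2 / 2) (at_right 0)"
    using coercivity_pos assms by (intro order_tendstoD) auto
  moreover have "eventually (\<lambda>\<epsilon>. \<forall>i. M $ i $ i * (S * C $ i * exp (- (ln (1/\<epsilon>) * (\<rho>/2)))) < \<rho> / 2) (at_right 0)"
    using eventually_diag_small[OF \<rho>] .
  ultimately show ?thesis
    using eventually_at_right_0_lt_1
  proof eventually_elim
    case (elim \<epsilon>)
    show ?case
    proof
      fix s assume "s \<in> {0<..S}"
      then have "coercivity * (norm (rescaled_integral \<epsilon> s - Phi s))^2 \<le> d * \<rho> + E \<epsilon>"
        using rescaled_integral_error[of \<epsilon> s S \<rho>] elim \<rho> by (simp add: d_def E_def mult_ac)
      then have "coercivity * (norm (rescaled_integral \<epsilon> s - Phi s))^2 < coercivity * e^2"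
        using elim d\<rho> by simp
      then show "norm (rescaled_integral \<epsilon> s - Phi s) < e"
        using coercivity_pos assms by (simp add: power_less_imp_less_base)
    qed
  qed
qed

lemma time_average_eq_rescaled_integral:
  assumes "0 < \<epsilon>" "\<epsilon> < 1" "0 < s"
  shows "(1 / (s * ln (1/\<epsilon>))) *\<^sub>R integral {0..s * ln (1/\<epsilon>)} (sol \<epsilon>) = (1 / s) *\<^sub>R rescaled_integral \<epsilon> s"
  using assms by (simp add: rescaled_integral_def)

lemma time_average_uniform_limit:
  assumes "compact K" "K \<subseteq> {0<..}"
  shows "uniform_limit K (\<lambda>\<epsilon> s. (1 / (s * ln (1/\<epsilon>))) *\<^sub>R integral {0..s * ln (1/\<epsilon>)} (sol \<epsilon>))
          (mu X y k) (at_right 0)"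
proof (cases "K = {}")
  case False
  obtain a where a: "a \<in> K" "\<And>t. t \<in> K \<Longrightarrow> a \<le> t"
    using compact_attains_inf[OF assms(1) False] by blast
  obtain S where S: "S \<in> K" "\<And>t. t \<in> K \<Longrightarrow> t \<le> S"
    using compact_attains_sup[OF assms(1) False] by blast
  have "0 < a" "0 < S" using a(1) S(1) assms(2) by auto
  show ?thesis
  proof (rule uniform_limitI)
    fix e :: real assume "0 < e"
    have "eventually (\<lambda>\<epsilon>. \<forall>s\<in>{0<..S}. norm (rescaled_integral \<epsilon> s - Phi s) < e * a) (at_right 0)"
      using rescaled_integral_tendsto_Phi \<open>0 < S\<close> \<open>0 < e\<close> \<open>0 < a\<close> by simp
    then show "eventually (\<lambda>\<epsilon>. \<forall>s\<in>K. dist ((1 / (s * ln (1/\<epsilon>))) *\<^sub>R integral {0..s * ln (1/\<epsilon>)} (sol \<epsilon>))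
        (mu X y k s) < e) (at_right 0)"
      using eventually_at_right_0_lt_1
    proof eventually_elim
      case (elim \<epsilon>)
      show ?case
      proof
        fix s assume "s \<in> K"
        then have s: "0 < s" "s \<le> S" "a \<le> s" using assms(2) S a by auto
        have "dist ((1 / (s * ln (1/\<epsilon>))) *\<^sub>R integral {0..s * ln (1/\<epsilon>)} (sol \<epsilon>)) (mu X y k s)
            = norm (rescaled_integral \<epsilon> s - Phi s) / s"
        proof -
          have "(1 / s) *\<^sub>R rescaled_integral \<epsilon> s - mu X y k s = (1 / s) *\<^sub>R (rescaled_integral \<epsilon> s - Phi s)"
            using s by (simp add: Phi_def scaleR_diff_right)
          then show ?thesis
            using elim s by (simp add: time_average_eq_rescaled_integral dist_norm)
        qed
        also have "\<dots> < e * a / s" using elim s by (intro divide_strict_right_mono) auto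
        also have "\<dots> \<le> e" using s \<open>0 < e\<close> by (simp add: field_simps mult_left_mono)
        finally show "dist ((1 / (s * ln (1/\<epsilon>))) *\<^sub>R integral {0..s * ln (1/\<epsilon>)} (sol \<epsilon>)) (mu X y k s) < e" .
      qed
    qed
  qed
qed simp

lemma growth_rescaled_integral_tendsto:
  assumes "0 < S" "0 < e"
  shows "eventually (\<lambda>\<epsilon>. \<forall>s\<in>{0<..S}. \<forall>i.
           \<bar>growth s (rescaled_integral \<epsilon> s) $ i - growth s (Phi s) $ i\<bar> < e) (at_right 0)"
proof -
  have "0 < e / (gram_norm + 1)" using assms gram_norm_nonneg by simp
  from rescaled_integral_tendsto_Phi[OF assms(1) this] show ?thesis
  proof eventually_elim
    case (elim \<epsilon>)
    show ?case
    proof (intro ballI allI)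
      fix s i assume "s \<in> {0<..S}"
      have "\<bar>growth s (rescaled_integral \<epsilon> s) $ i - growth s (Phi s) $ i\<bar>
          = \<bar>(M *v (Phi s - rescaled_integral \<epsilon> s)) $ i\<bar>"
        by (simp add: growth_def matrix_vector_mult_diff_distrib)
      also have "\<dots> \<le> gram_norm * norm (Phi s - rescaled_integral \<epsilon> s)"
        by (rule abs_gram_mult_component_le)
      also have "\<dots> \<le> gram_norm * (e / (gram_norm + 1))"
        using elim \<open>s \<in> {0<..S}\<close> gram_norm_nonneg
        by (intro mult_left_mono) (auto simp: norm_minus_commute less_imp_le)
      also have "\<dots> < e" using gram_norm_nonneg assms by (simp add: field_simps)
      finally show "\<bar>growth s (rescaled_integral \<epsilon> s) $ i - growth s (Phi s) $ i\<bar> < e" .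
    qed
  qed
qed

lemma eventually_growth_rescaled_integral_close:
  assumes "0 < S" "\<And>i. 0 < e i"
  shows "eventually (\<lambda>\<epsilon>. \<forall>i. \<forall>s\<in>{0<..S}.
           \<bar>growth s (rescaled_integral \<epsilon> s) $ i - growth s (Phi s) $ i\<bar> < e i) (at_right 0)"
proof (rule eventually_all_finite)
  fix i
  from growth_rescaled_integral_tendsto[OF assms(1) assms(2)[of i]]
  show "eventually (\<lambda>\<epsilon>. \<forall>s\<in>{0<..S}.
      \<bar>growth s (rescaled_integral \<epsilon> s) $ i - growth s (Phi s) $ i\<bar> < e i) (at_right 0)"
    by (auto elim: eventually_mono)
qed

section \<open>Convergence near a regular point\<close>

lemma coupling_le:
  assumes \<epsilon>: "0 < \<epsilon>" "\<epsilon> < 1" and "0 \<le> a"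
    and off: "\<And>\<sigma> j. a \<le> \<sigma> \<Longrightarrow> \<sigma> \<le> b \<Longrightarrow> j \<notin> A \<Longrightarrow> growth \<sigma> (rescaled_integral \<epsilon> \<sigma>) $ j \<le> - c j"
    and on: "\<And>j. j \<in> A \<Longrightarrow> v $ j = 0"
    and t: "a * ln (1/\<epsilon>) \<le> t" "t \<le> b * ln (1/\<epsilon>)"
  shows "\<bar>inner (sol \<epsilon> t) v\<bar> \<le> (\<Sum>j\<in>UNIV. \<bar>v $ j\<bar> * C $ j * exp (- (ln (1/\<epsilon>) * c j)))"
proof -
  define L where "L = ln (1/\<epsilon>)"
  have L: "0 < L" using \<epsilon> by (simp add: L_def)
  define \<sigma> where "\<sigma> = t / L"
  have \<sigma>: "a \<le> \<sigma>" "\<sigma> \<le> b" "t = \<sigma> * L"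
    using t L by (auto simp: \<sigma>_def L_def field_simps)
  then have "0 \<le> \<sigma>" using \<open>0 \<le> a\<close> by simp
  note \<sigma> = \<sigma>(1,2) this \<sigma>(3)
  have "\<bar>sol \<epsilon> t $ j * v $ j\<bar> \<le> \<bar>v $ j\<bar> * C $ j * exp (- (L * c j))" for j
  proof (cases "j \<in> A")
    case False
    have "L * growth \<sigma> (rescaled_integral \<epsilon> \<sigma>) $ j \<le> L * - c j"
      using off[OF \<sigma>(1,2) False] L by (intro mult_left_mono) auto
    then have "sol \<epsilon> t $ j \<le> C $ j * exp (- (L * c j))"
      using sol_rescaled[OF \<epsilon> \<sigma>(3), of j] C_pos[of j] \<sigma>(4) by (simp add: L_def)
    moreover have "0 < sol \<epsilon> t $ j"
      using dln_flow.flow_pos[OF dln_flow_sol[OF \<epsilon>(1)]] \<sigma> L by simp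
    ultimately have "\<bar>v $ j\<bar> * sol \<epsilon> t $ j \<le> \<bar>v $ j\<bar> * (C $ j * exp (- (L * c j)))"
      by (intro mult_left_mono) auto
    then show ?thesis
      using \<open>0 < sol \<epsilon> t $ j\<close> by (simp add: abs_mult mult_ac)
  qed (simp add: on)
  then have "\<bar>inner (sol \<epsilon> t) v\<bar> \<le> (\<Sum>j\<in>UNIV. \<bar>v $ j\<bar> * C $ j * exp (- (L * c j)))"
    unfolding inner_vec_def inner_real_def by (intro order.trans[OF sum_abs sum_mono])
  then show ?thesis by (simp add: L_def)
qed

lemma lyapunov_gap:
  assumes \<epsilon>: "0 < \<epsilon>" "\<epsilon> < 1" and \<sigma>: "0 \<le> a" "a \<le> b"
    and ts: "nonneg_vec ts" "\<And>i. i \<notin> A \<Longrightarrow> ts $ i = 0"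
    and on: "\<And>i. i \<in> A \<Longrightarrow> - \<rho> < growth a (rescaled_integral \<epsilon> a) $ i"
  shows "(\<Sum>i\<in>UNIV. sol \<epsilon> (a * ln (1/\<epsilon>)) $ i - ts $ i * ln (sol \<epsilon> (a * ln (1/\<epsilon>)) $ i))
       - (\<Sum>i\<in>UNIV. sol \<epsilon> (b * ln (1/\<epsilon>)) $ i - ts $ i * ln (sol \<epsilon> (b * ln (1/\<epsilon>)) $ i))
     \<le> real CARD('d) * sol_bound + (\<Sum>i\<in>UNIV. ts $ i * (ln (sol_bound / C $ i) + ln (1/\<epsilon>) * \<rho>))"
proof -
  define L where "L = ln (1/\<epsilon>)"
  have L: "0 < L" using \<epsilon> by (simp add: L_def)
  interpret dln_flow X y "sol \<epsilon>" using dln_flow_sol \<epsilon>(1) .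
  define \<theta>a where "\<theta>a = sol \<epsilon> (a * L)"
  define \<theta>b where "\<theta>b = sol \<epsilon> (b * L)"
  have pos: "0 < \<theta>a $ i" "0 < \<theta>b $ i" for i
    using \<sigma> L by (auto simp: \<theta>a_def \<theta>b_def intro!: flow_pos)
  have "\<theta>a $ i - \<theta>b $ i - ts $ i * (ln (\<theta>a $ i) - ln (\<theta>b $ i)) \<le> sol_bound + ts $ i * (ln (sol_bound / C $ i) + L * \<rho>)" for i
  proof (cases "i \<in> A")
    case True
    have "ln (\<theta>b $ i) \<le> ln sol_bound"
      using pos[of i] sol_le_bound[OF \<epsilon>(1) less_imp_le[OF \<epsilon>(2)], of "b * L" i] \<sigma> L by (simp add: \<theta>b_def)
    moreover have "L * - \<rho> < L * growth a (rescaled_integral \<epsilon> a) $ i"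
      using mult_strict_left_mono[OF on[OF True] L] .
    then have "ln (C $ i) - L * \<rho> < ln (\<theta>a $ i)"
      using sol_rescaled[OF \<epsilon> \<sigma>(1), of i] C_pos[of i] by (simp add: \<theta>a_def L_def ln_mult)
    ultimately have "ts $ i * (ln (\<theta>b $ i) - ln (\<theta>a $ i)) \<le> ts $ i * (ln (sol_bound / C $ i) + L * \<rho>)"
      using ts(1) C_pos[of i] sol_bound_pos by (intro mult_left_mono) (auto simp: ln_div nonneg_vec_def)
    moreover have "\<theta>a $ i \<le> sol_bound"
      using sol_le_bound[OF \<epsilon>(1) less_imp_le[OF \<epsilon>(2)], of "a * L" i] \<sigma> L by (simp add: \<theta>a_def)
    ultimately show ?thesis using pos[of i] by (simp add: algebra_simps)
  next
    case False
    then show ?thesis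
      using ts(2) pos[of i] sol_le_bound[OF \<epsilon>(1) less_imp_le[OF \<epsilon>(2)], of "a * L" i] \<sigma> L
      by (simp add: \<theta>a_def)
  qed
  then have "(\<Sum>i\<in>UNIV. \<theta>a $ i - \<theta>b $ i - ts $ i * (ln (\<theta>a $ i) - ln (\<theta>b $ i)))
      \<le> (\<Sum>i\<in>UNIV. sol_bound + ts $ i * (ln (sol_bound / C $ i) + L * \<rho>))"
    by (rule sum_mono)
  then show ?thesis
    by (simp add: \<theta>a_def \<theta>b_def L_def sum.distrib sum_subtractf algebra_simps)
qed

context
  fixes \<epsilon> dl s \<rho> \<tau> g :: real and ts :: "real^'d" and A :: "'d set" and c :: "'d \<Rightarrow> real"
  assumes \<epsilon>: "0 < \<epsilon>" "\<epsilon> < 1" and dl: "0 < dl" "dl < s"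
    and ts: "nonneg_vec ts" "\<And>i. i \<notin> A \<Longrightarrow> ts $ i = 0" "\<And>i. i \<in> A \<Longrightarrow> (r - M *v ts) $ i = 0"
    and on: "\<And>i. i \<in> A \<Longrightarrow> - \<rho> < growth (s - dl) (rescaled_integral \<epsilon> (s - dl)) $ i"
    and off: "\<And>\<sigma> j. s - dl \<le> \<sigma> \<Longrightarrow> \<sigma> \<le> s \<Longrightarrow> j \<notin> A \<Longrightarrow> growth \<sigma> (rescaled_integral \<epsilon> \<sigma>) $ j \<le> - c j"
    and \<tau>: "\<tau> = (\<Sum>j\<in>UNIV. \<bar>(r - M *v ts) $ j\<bar> * C $ j * exp (- (ln (1/\<epsilon>) * c j)))"
    and \<tau>_small: "\<tau> \<le> coercivity * g / 2"
    and \<rho>_small: "\<rho> * (\<Sum>i\<in>UNIV. ts $ i) \<le> coercivity * g * dl / 4"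
    and L_large: "real CARD('d) * sol_bound + (\<Sum>i\<in>UNIV. ts $ i * ln (sol_bound / C $ i))
                  < coercivity * g * dl / 4 * ln (1/\<epsilon>)"
begin

lemma equilibrium_complementarity: "inner ts (r - M *v ts) = 0"
  unfolding inner_vec_def inner_real_def
  by (intro sum.neutral ballI) (metis mult_zero_left mult_zero_right ts(2,3))

lemma window_coupling_le:
  assumes "(s - dl) * ln (1/\<epsilon>) \<le> t" "t \<le> s * ln (1/\<epsilon>)"
  shows "\<bar>inner (sol \<epsilon> t) (r - M *v ts)\<bar> \<le> \<tau>"
  unfolding \<tau> using assms dl ts(3) by (intro coupling_le[OF \<epsilon>, where A = A and a = "s - dl" and b = s] off) auto

lemma sol_visits_equilibrium:
  "\<exists>t0\<in>{(s - dl) * ln (1/\<epsilon>)..s * ln (1/\<epsilon>)}. (norm (sol \<epsilon> t0 - ts))^2 < g"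
proof -
  interpret dln_flow X y "sol \<epsilon>" using dln_flow_sol \<epsilon>(1) .
  define L where "L = ln (1/\<epsilon>)"
  have L: "0 < L" using \<epsilon> by (simp add: L_def)
  have window: "0 < (s - dl) * L" "(s - dl) * L \<le> s * L" using L dl by auto
  have "(\<Sum>i\<in>UNIV. ts $ i * (ln (sol_bound / C $ i) + L * \<rho>))
      = (\<Sum>i\<in>UNIV. ts $ i * ln (sol_bound / C $ i)) + L * (\<rho> * (\<Sum>i\<in>UNIV. ts $ i))"
    by (simp add: distrib_left sum.distrib sum_distrib_left mult_ac)
  moreover have "L * (\<rho> * (\<Sum>i\<in>UNIV. ts $ i)) \<le> L * (coercivity * g * dl / 4)"
    using \<rho>_small L by (intro mult_left_mono) auto
  moreover have "coercivity * g / 2 * (dl * L) \<le> (coercivity * g - \<tau>) * (dl * L)"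
    using \<tau>_small dl L by (intro mult_right_mono) (auto simp: mult.commute)
  ultimately have "real CARD('d) * sol_bound + (\<Sum>i\<in>UNIV. ts $ i * (ln (sol_bound / C $ i) + L * \<rho>))
      < (coercivity * g - \<tau>) * (s * L - (s - dl) * L)"
    using L_large[folded L_def] by (simp add: algebra_simps)
  moreover have "(\<Sum>i\<in>UNIV. sol \<epsilon> ((s - dl) * L) $ i - ts $ i * ln (sol \<epsilon> ((s - dl) * L) $ i))
      - (\<Sum>i\<in>UNIV. sol \<epsilon> (s * L) $ i - ts $ i * ln (sol \<epsilon> (s * L) $ i))
      \<le> real CARD('d) * sol_bound + (\<Sum>i\<in>UNIV. ts $ i * (ln (sol_bound / C $ i) + L * \<rho>))"
    unfolding L_def using dl by (intro lyapunov_gap[OF \<epsilon> _ _ ts(1,2) on]) auto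
  ultimately show ?thesis
    unfolding L_def
    using window_coupling_le equilibrium_complementarity abs_ge_self window[unfolded L_def]
    by (intro flow_approaches_equilibrium[OF _ _ coercivity_le less_imp_le[OF coercivity_pos]])
      (auto simp: L_def intro: order.trans)
qed

lemma sol_near_equilibrium:
  "coercivity * (norm (sol \<epsilon> (s * ln (1/\<epsilon>)) - ts))^2 \<le> gram_norm * g + 4 * \<tau>"
proof -
  interpret dln_flow X y "sol \<epsilon>" using dln_flow_sol \<epsilon>(1) .
  define L where "L = ln (1/\<epsilon>)"
  define e where "e = r - M *v ts"
  have window: "0 < (s - dl) * L" "(s - dl) * L \<le> s * L" using \<epsilon> dl by (auto simp: L_def)
  obtain t0 where t0: "(s - dl) * L \<le> t0" "t0 \<le> s * L" "(norm (sol \<epsilon> t0 - ts))^2 < g"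
    using sol_visits_equilibrium by (auto simp: L_def)
  have "coercivity * (norm (sol \<epsilon> (s * L) - ts))^2 \<le> inner (sol \<epsilon> (s * L) - ts) (M *v (sol \<epsilon> (s * L) - ts))"
    by (rule coercivity_le)
  also have "\<dots> \<le> inner (sol \<epsilon> t0 - ts) (M *v (sol \<epsilon> t0 - ts)) + 2 * inner e (sol \<epsilon> (s * L)) - 2 * inner e (sol \<epsilon> t0)"
    unfolding e_def using equilibrium_complementarity t0 window by (intro flow_energy_distance) auto
  also have "\<dots> \<le> gram_norm * g + 4 * \<tau>"
  proof -
    have "inner (sol \<epsilon> t0 - ts) (M *v (sol \<epsilon> t0 - ts)) \<le> gram_norm * g"
      using inner_gram_le[of "sol \<epsilon> t0 - ts"] t0(3) gram_norm_nonneg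
      by (meson less_imp_le mult_left_mono order.trans)
    moreover have "\<bar>inner e (sol \<epsilon> (s * L))\<bar> \<le> \<tau>" "\<bar>inner e (sol \<epsilon> t0)\<bar> \<le> \<tau>"
      using window_coupling_le[of "s * L"] window_coupling_le[of t0] window t0
      by (auto simp: L_def e_def inner_commute)
    ultimately show ?thesis by linarith
  qed
  finally show ?thesis by (simp add: L_def)
qed

end

lemma sol_near_theta_star_on_window:
  assumes "0 < dl"
    and const: "\<And>s. s0 - 2 * dl \<le> s \<Longrightarrow> s \<le> s0 + 2 * dl \<Longrightarrow> 0 < s \<and> supp_mu X y k s = A"
    and \<epsilon>: "0 < \<epsilon>" "\<epsilon> < 1" and s: "s0 - dl \<le> s" "s \<le> s0 + dl"
    and close: "\<And>\<sigma> i. 0 < \<sigma> \<Longrightarrow> \<sigma> \<le> s0 + 2 * dl \<Longrightarrow>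
       \<bar>growth \<sigma> (rescaled_integral \<epsilon> \<sigma>) $ i - growth \<sigma> (Phi \<sigma>) $ i\<bar> < min \<rho> (dl * r $ i / 2)"
    and \<tau>: "\<tau> = (\<Sum>j\<in>UNIV. \<bar>(r - M *v theta_star X y A) $ j\<bar> * C $ j * exp (- (ln (1/\<epsilon>) * (dl * r $ j / 2))))"
    and \<tau>_small: "\<tau> \<le> coercivity * g / 2"
    and \<rho>_small: "\<rho> * (\<Sum>i\<in>UNIV. theta_star X y A $ i) \<le> coercivity * g * dl / 4"
    and L_large: "real CARD('d) * sol_bound + (\<Sum>i\<in>UNIV. theta_star X y A $ i * ln (sol_bound / C $ i))
                  < coercivity * g * dl / 4 * ln (1/\<epsilon>)"
  shows "coercivity * (norm (sol \<epsilon> (s * ln (1/\<epsilon>)) - theta_star X y (supp_mu X y k s)))^2 \<le> gram_norm * g + 4 * \<tau>"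
proof -
  note window = constant_support_window[OF assms(1,2)]
  have s0: "0 < s0 - 2 * dl" using const[of "s0 - 2 * dl"] assms(1) by simp
  have "theta_star X y (supp_mu X y k s) = theta_star X y A" using const[of s] s assms(1) by simp
  moreover have "coercivity * (norm (sol \<epsilon> (s * ln (1/\<epsilon>)) - theta_star X y A))^2 \<le> gram_norm * g + 4 * \<tau>"
  proof (rule sol_near_equilibrium[OF \<epsilon> assms(1) _ window(1-3) _ _ \<tau> \<tau>_small \<rho>_small L_large])
    show "dl < s" using s s0 by simp
    show "- \<rho> < growth (s - dl) (rescaled_integral \<epsilon> (s - dl)) $ i" if "i \<in> A" for i
    proof -
      have "growth (s - dl) (Phi (s - dl)) $ i = 0" by (rule window(4)) (use that s in auto)
      then show ?thesis using close[of "s - dl" i] s s0 by auto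
    qed
    show "growth \<sigma> (rescaled_integral \<epsilon> \<sigma>) $ j \<le> - (dl * r $ j / 2)"
      if "s - dl \<le> \<sigma>" "\<sigma> \<le> s" "j \<notin> A" for \<sigma> j
    proof -
      have "growth \<sigma> (Phi \<sigma>) $ j \<le> - (dl * r $ j)" by (rule window(5)) (use that s in auto)
      moreover have "\<bar>growth \<sigma> (rescaled_integral \<epsilon> \<sigma>) $ j - growth \<sigma> (Phi \<sigma>) $ j\<bar> < min \<rho> (dl * r $ j / 2)"
        by (rule close) (use that s s0 in auto)
      then have "growth \<sigma> (rescaled_integral \<epsilon> \<sigma>) $ j - growth \<sigma> (Phi \<sigma>) $ j < dl * r $ j / 2"
        using abs_ge_self min.cobounded2 by (metis le_less_trans order.strict_trans2)
      ultimately show ?thesis by simp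
    qed
  qed
  ultimately show ?thesis by simp
qed

lemma sol_uniform_limit_constant_support:
  assumes "0 < dl"
    and const: "\<And>s. s0 - 2 * dl \<le> s \<Longrightarrow> s \<le> s0 + 2 * dl \<Longrightarrow> 0 < s \<and> supp_mu X y k s = A"
  shows "uniform_limit {s0 - dl..s0 + dl} (\<lambda>\<epsilon> s. sol \<epsilon> (s * ln (1/\<epsilon>)))
           (\<lambda>s. theta_star X y (supp_mu X y k s)) (at_right 0)"
proof (rule uniform_limitI)
  fix e0 :: real assume "0 < e0"
  define ts where "ts = theta_star X y A"
  have s0: "0 < s0 - 2 * dl" using const[of "s0 - 2 * dl"] assms(1) by simp
  have ts_sum: "0 \<le> (\<Sum>i\<in>UNIV. ts $ i)"
    using constant_support_window(1)[OF assms] by (simp add: ts_def sum_nonneg nonneg_vec_def)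
  define g where "g = coercivity * e0^2 / 2 / (gram_norm + 1)"
  have g: "0 < g" using coercivity_pos \<open>0 < e0\<close> gram_norm_nonneg by (simp add: g_def)
  define \<rho> where "\<rho> = coercivity * g * dl / 4 / ((\<Sum>i\<in>UNIV. ts $ i) + 1)"
  have \<rho>: "0 < \<rho>" using coercivity_pos g assms(1) ts_sum by (simp add: \<rho>_def)
  define K where "K = (real CARD('d) * sol_bound + (\<Sum>i\<in>UNIV. ts $ i * ln (sol_bound / C $ i))) / (coercivity * g * dl / 4)"
  define \<tau> where "\<tau> \<epsilon> = (\<Sum>j\<in>UNIV. \<bar>(r - M *v ts) $ j\<bar> * C $ j * exp (- (ln (1/\<epsilon>) * (dl * r $ j / 2))))" for \<epsilon>
  have "eventually (\<lambda>\<epsilon>. \<forall>i. \<forall>\<sigma>\<in>{0<..s0 + 2 * dl}.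
      \<bar>growth \<sigma> (rescaled_integral \<epsilon> \<sigma>) $ i - growth \<sigma> (Phi \<sigma>) $ i\<bar> < min \<rho> (dl * r $ i / 2)) (at_right 0)"
    using s0 \<rho> assms(1) corr_pos by (intro eventually_growth_rescaled_integral_close) auto
  moreover have "eventually (\<lambda>\<epsilon>. \<tau> \<epsilon> < min (coercivity * g / 2) (coercivity * e0^2 / 8)) (at_right 0)"
  proof -
    have "(\<tau> \<longlongrightarrow> (\<Sum>j\<in>UNIV. \<bar>(r - M *v ts) $ j\<bar> * C $ j * 0)) (at_right 0)"
      unfolding \<tau>_def using assms(1) corr_pos
      by (intro tendsto_intros tendsto_exp_ln_inverse_at_right_0) simp
    then show ?thesis
      using coercivity_pos g \<open>0 < e0\<close> by (intro order_tendstoD) auto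
  qed
  moreover have "eventually (\<lambda>\<epsilon>. K < ln (1/\<epsilon>)) (at_right 0)"
    using filterlim_ln_inverse_at_right_0 by (simp add: filterlim_at_top_dense)
  ultimately show "eventually (\<lambda>\<epsilon>. \<forall>s\<in>{s0 - dl..s0 + dl}.
      dist (sol \<epsilon> (s * ln (1/\<epsilon>))) (theta_star X y (supp_mu X y k s)) < e0) (at_right 0)"
    using eventually_at_right_0_lt_1
  proof eventually_elim
    case (elim \<epsilon>)
    show ?case
    proof
      fix s assume "s \<in> {s0 - dl..s0 + dl}"
      have "coercivity * (norm (sol \<epsilon> (s * ln (1/\<epsilon>)) - theta_star X y (supp_mu X y k s)))^2
          \<le> gram_norm * g + 4 * \<tau> \<epsilon>"
      proof (rule sol_near_theta_star_on_window[OF assms, where \<rho> = \<rho>])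
        show "\<rho> * (\<Sum>i\<in>UNIV. theta_star X y A $ i) \<le> coercivity * g * dl / 4"
          unfolding \<rho>_def ts_def[symmetric] using coercivity_pos g assms(1) ts_sum
          by (intro divide_add_one_mult_le) auto
        show "real CARD('d) * sol_bound + (\<Sum>i\<in>UNIV. theta_star X y A $ i * ln (sol_bound / C $ i))
            < coercivity * g * dl / 4 * ln (1/\<epsilon>)"
          using elim coercivity_pos g assms(1) by (simp add: K_def ts_def pos_divide_less_eq mult.commute)
      qed (use elim \<open>s \<in> {s0 - dl..s0 + dl}\<close> in \<open>auto simp: \<tau>_def ts_def\<close>)
      also have "\<dots> < coercivity * e0^2"
        using divide_add_one_mult_le[of gram_norm "coercivity * e0^2 / 2"] gram_norm_nonneg coercivity_pos elim
        by (simp add: g_def mult.commute)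
      finally have "(norm (sol \<epsilon> (s * ln (1/\<epsilon>)) - theta_star X y (supp_mu X y k s)))^2 < e0^2"
        using coercivity_pos by simp
      then show "dist (sol \<epsilon> (s * ln (1/\<epsilon>))) (theta_star X y (supp_mu X y k s)) < e0"
        using \<open>0 < e0\<close> by (simp add: dist_norm power_less_imp_less_base)
    qed
  qed
qed

lemma sol_uniform_limit:
  assumes "compact K" "K \<subseteq> {0<..} - jump_points X y k"
  shows "uniform_limit K (\<lambda>\<epsilon> s. sol \<epsilon> (s * ln (1/\<epsilon>)))
          (\<lambda>s. theta_star X y (supp_mu X y k s)) (at_right 0)"
proof -
  have local: "\<forall>s0\<in>K. \<exists>dl. 0 < dl \<and> uniform_limit {s0 - dl..s0 + dl} (\<lambda>\<epsilon> s. sol \<epsilon> (s * ln (1/\<epsilon>)))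
          (\<lambda>s. theta_star X y (supp_mu X y k s)) (at_right 0)"
  proof
    fix s0 assume "s0 \<in> K"
    then have "0 < s0" "s0 \<notin> jump_points X y k" using assms(2) by auto
    then obtain dl where "0 < dl"
      "\<And>s. s0 - 2 * dl \<le> s \<Longrightarrow> s \<le> s0 + 2 * dl \<Longrightarrow> 0 < s \<and> supp_mu X y k s = supp_mu X y k s0"
      by (rule regular_point_constant_window) blast
    then have "uniform_limit {s0 - dl..s0 + dl} (\<lambda>\<epsilon> s. sol \<epsilon> (s * ln (1/\<epsilon>)))
          (\<lambda>s. theta_star X y (supp_mu X y k s)) (at_right 0)"
      by (rule sol_uniform_limit_constant_support)
    then show "\<exists>dl. 0 < dl \<and> uniform_limit {s0 - dl..s0 + dl} (\<lambda>\<epsilon> s. sol \<epsilon> (s * ln (1/\<epsilon>)))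
          (\<lambda>s. theta_star X y (supp_mu X y k s)) (at_right 0)"
      using \<open>0 < dl\<close> by blast
  qed
  obtain dl where dl: "\<forall>s0\<in>K. 0 < dl s0 \<and> uniform_limit {s0 - dl s0..s0 + dl s0}
      (\<lambda>\<epsilon> s. sol \<epsilon> (s * ln (1/\<epsilon>))) (\<lambda>s. theta_star X y (supp_mu X y k s)) (at_right 0)"
    using bchoice[OF local] by blast
  have cover: "K \<subseteq> (\<Union>s0\<in>K. ball s0 (dl s0))"
  proof
    fix s0 assume "s0 \<in> K"
    then have "s0 \<in> ball s0 (dl s0)" using dl by simp
    then show "s0 \<in> (\<Union>s0\<in>K. ball s0 (dl s0))" using \<open>s0 \<in> K\<close> by blast
  qed
  obtain D where D: "D \<subseteq> K" "finite D" "K \<subseteq> (\<Union>s0\<in>D. ball s0 (dl s0))"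
    by (rule compactE_image[OF assms(1) _ cover]) auto
  have "uniform_limit (\<Union>s0\<in>D. {s0 - dl s0..s0 + dl s0}) (\<lambda>\<epsilon> s. sol \<epsilon> (s * ln (1/\<epsilon>)))
          (\<lambda>s. theta_star X y (supp_mu X y k s)) (at_right 0)"
    by (rule uniform_limit_on_UNION[OF D(2)]) (use dl D(1) in blast)
  moreover have "K \<subseteq> (\<Union>s0\<in>D. {s0 - dl s0..s0 + dl s0})"
  proof
    fix s assume "s \<in> K"
    then obtain s0 where "s0 \<in> D" "s \<in> ball s0 (dl s0)" using D(3) by blast
    then have "s \<in> {s0 - dl s0..s0 + dl s0}" by (auto simp: dist_real_def)
    then show "s \<in> (\<Union>s0\<in>D. {s0 - dl s0..s0 + dl s0})" using \<open>s0 \<in> D\<close> by blast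
  qed
  ultimately show ?thesis by (rule uniform_limit_on_subset)
qed

end

theorem theorem1:
  fixes X :: "real^'d^'n" and y :: "real^'n" and C k :: "real^'d"
    and sol :: "real \<Rightarrow> real \<Rightarrow> real^'d"
  assumes r_pos: "\<forall>i. corr X y $ i > 0"
    and offdiag: "\<forall>i j. i \<noteq> j \<longrightarrow> gram X $ i $ j \<le> 0"
    and C_pos: "\<forall>i. C $ i > 0"
    and k_pos: "\<forall>i. k $ i > 0"
    and sol_init: "\<forall>\<epsilon>>0. sol \<epsilon> 0 = (\<chi> i. C $ i * \<epsilon> powr (k $ i))"
    and sol_ode: "\<forall>\<epsilon>>0. \<forall>t\<ge>0.
       (sol \<epsilon> has_vector_derivative dln_field X y (sol \<epsilon> t)) (at t within {0..})"
  shows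
    "(\<forall>s s'. 0 < s \<longrightarrow> s \<le> s' \<longrightarrow> (\<forall>i. mu X y k s $ i \<le> mu X y k s' $ i))
   \<and> (\<forall>s s'. 0 < s \<longrightarrow> s \<le> s' \<longrightarrow> supp_mu X y k s \<subseteq> supp_mu X y k s')
   \<and> finite (jump_points X y k)
   \<and> (\<forall>s>0. s \<notin> jump_points X y k \<longrightarrow>
        ((\<lambda>\<epsilon>. sol \<epsilon> (s * ln (1/\<epsilon>))) \<longlongrightarrow> theta_star X y (supp_mu X y k s)) (at_right 0))
   \<and> (\<forall>K. compact K \<longrightarrow> K \<subseteq> {0<..} - jump_points X y k \<longrightarrow>
        uniform_limit K (\<lambda>\<epsilon> s. sol \<epsilon> (s * ln (1/\<epsilon>)))
          (\<lambda>s. theta_star X y (supp_mu X y k s)) (at_right 0))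
   \<and> (\<forall>s>0. ((\<lambda>\<epsilon>. (1 / (s * ln (1/\<epsilon>))) *\<^sub>R integral {0..s * ln (1/\<epsilon>)} (sol \<epsilon>))
        \<longlongrightarrow> mu X y k s) (at_right 0))
   \<and> (\<forall>K. compact K \<longrightarrow> K \<subseteq> {0<..} \<longrightarrow>
        uniform_limit K (\<lambda>\<epsilon> s. (1 / (s * ln (1/\<epsilon>))) *\<^sub>R integral {0..s * ln (1/\<epsilon>)} (sol \<epsilon>))
          (mu X y k) (at_right 0))"
proof -
  interpret dln X y k C sol
    using assms by unfold_locales (auto simp: Z_matrix_def)
  have sol_limit: "((\<lambda>\<epsilon>. sol \<epsilon> (s * ln (1/\<epsilon>))) \<longlongrightarrow> theta_star X y (supp_mu X y k s)) (at_right 0)"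
    if "0 < s" "s \<notin> jump_points X y k" for s
    using sol_uniform_limit[of "{s}"] that by (auto intro: tendsto_uniform_limitI)
  have average_limit: "((\<lambda>\<epsilon>. (1 / (s * ln (1/\<epsilon>))) *\<^sub>R integral {0..s * ln (1/\<epsilon>)} (sol \<epsilon>))
      \<longlongrightarrow> mu X y k s) (at_right 0)" if "0 < s" for s
    using time_average_uniform_limit[of "{s}"] that by (auto intro: tendsto_uniform_limitI)
  show ?thesis
    using mu_mono supp_mu_mono finite_jump_points sol_limit sol_uniform_limit
      average_limit time_average_uniform_limit by simp
qed

end
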